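(* Let $k\ge1$, $\Sigma$ a Riemann surface and $\phi$ a holomorphic $k$-differential on $\Sigma$. For any subsolution $g_-$ and supersolution $g_+$ of the vortex equation on $(\Sigma,\phi)$, the conformal ratio $g_-/g_+$ has no local maximum with value greater than $1$. If $g_-/g_+$ attains a local maximum equal to $1$ at a point $p\in\Sigma$, then $g_+=g_-$ on a neighborhood of $p$.
   Context: Vortex equation: $\kappa_g=-1+\|\phi\|_g^2$ for a conformal metric $g$. A sub- (resp. super-) solution is a continuous conformal metric $g$ of Sobolev class $H^1_{loc}$ such that for every local conformal coordinate $z$, writing $g=e^u|dz|^2$ and $\phi=\phi(z)dz^k$, one has $\Delta u\ge2(e^u-e^{(1-k)u}|\phi|^2)$ (resp. $\le$) in the weak sense, $\Delta=\partial_x^2+\partial_y^2$. *)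

theory Defs
  imports "HOL-Complex_Analysis.Complex_Analysis"
begin

type_synonym 'a chart = "'a set \<times> ('a \<Rightarrow> complex)"

definition riemann_surface :: "'a::t2_space chart set \<Rightarrow> bool" where
  "riemann_surface A \<longleftrightarrow>
     connected (UNIV :: 'a set) \<and>
     (\<Union>(fst ` A) = UNIV) \<and>
     (\<forall>c\<in>A. open (fst c) \<and> open (snd c ` fst c) \<and>
             homeomorphism (fst c) (snd c ` fst c) (snd c) (inv_into (fst c) (snd c))) \<and>
     (\<forall>c\<in>A. \<forall>d\<in>A. (snd d \<circ> inv_into (fst c) (snd c)) holomorphic_on snd c ` (fst c \<inter> fst d))"

definition trans_map :: "'a chart \<Rightarrow> 'a chart \<Rightarrow> complex \<Rightarrow> complex" where
  "trans_map c d = snd d \<circ> inv_into (fst c) (snd c)"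

text \<open>A continuous conformal metric, given in every chart c by its density G c,
  i.e. g = G c z |dz|^2 on the chart.\<close>
definition conformal_metric :: "'a chart set \<Rightarrow> ('a chart \<Rightarrow> complex \<Rightarrow> real) \<Rightarrow> bool" where
  "conformal_metric A G \<longleftrightarrow>
     (\<forall>c\<in>A. continuous_on (snd c ` fst c) (G c) \<and> (\<forall>x\<in>snd c ` fst c. G c x > 0)) \<and>
     (\<forall>c\<in>A. \<forall>d\<in>A. \<forall>p\<in>fst c \<inter> fst d.
        G c (snd c p) = G d (snd d p) * (norm (deriv (trans_map c d) (snd c p)))\<^sup>2)"

text \<open>A holomorphic k-differential, given in every chart c by the coefficient Phi c,
  i.e. phi = Phi c z dz^k on the chart.\<close>
definition holomorphic_kdiff :: "'a chart set \<Rightarrow> nat \<Rightarrow> ('a chart \<Rightarrow> complex \<Rightarrow> complex) \<Rightarrow> bool" where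
  "holomorphic_kdiff A k Phi \<longleftrightarrow>
     (\<forall>c\<in>A. Phi c holomorphic_on snd c ` fst c) \<and>
     (\<forall>c\<in>A. \<forall>d\<in>A. \<forall>p\<in>fst c \<inter> fst d.
        Phi c (snd c p) = Phi d (snd d p) * (deriv (trans_map c d) (snd c p)) ^ k)"

definition pd :: "complex \<Rightarrow> (complex \<Rightarrow> real) \<Rightarrow> complex \<Rightarrow> real" where
  "pd e f z = deriv (\<lambda>t::real. f (z + of_real t * e)) 0"

text \<open>Iterated partial derivatives; True = d/dy, False = d/dx.\<close>
fun iter_pd :: "bool list \<Rightarrow> (complex \<Rightarrow> real) \<Rightarrow> complex \<Rightarrow> real" where
  "iter_pd [] f = f"
| "iter_pd (b # bs) f = pd (if b then \<i> else 1) (iter_pd bs f)"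

definition smooth_fn :: "(complex \<Rightarrow> real) \<Rightarrow> bool" where
  "smooth_fn f \<longleftrightarrow>
     (\<forall>bs. continuous_on UNIV (iter_pd bs f) \<and>
        (\<forall>z. \<forall>e\<in>{1, \<i>}. (\<lambda>t::real. iter_pd bs f (z + of_real t * e)) differentiable (at 0)))"

definition test_fn :: "complex set \<Rightarrow> (complex \<Rightarrow> real) \<Rightarrow> bool" where
  "test_fn V \<psi> \<longleftrightarrow> smooth_fn \<psi> \<and> compact (closure {z. \<psi> z \<noteq> 0}) \<and> closure {z. \<psi> z \<noteq> 0} \<subseteq> V"

definition laplacian :: "(complex \<Rightarrow> real) \<Rightarrow> complex \<Rightarrow> real" where
  "laplacian \<psi> z = iter_pd [False, False] \<psi> z + iter_pd [True, True] \<psi> z"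

definition L2_loc :: "complex set \<Rightarrow> (complex \<Rightarrow> real) \<Rightarrow> bool" where
  "L2_loc V f \<longleftrightarrow> set_borel_measurable lborel V f \<and>
     (\<forall>K. compact K \<and> K \<subseteq> V \<longrightarrow> set_integrable lborel K (\<lambda>z. (f z)\<^sup>2))"

definition H1_loc :: "complex set \<Rightarrow> (complex \<Rightarrow> real) \<Rightarrow> bool" where
  "H1_loc V u \<longleftrightarrow> L2_loc V u \<and>
     (\<forall>e\<in>{1, \<i>}. \<exists>v. L2_loc V v \<and>
        (\<forall>\<psi>. test_fn V \<psi> \<longrightarrow>
           (LINT z|lborel. u z * pd e \<psi> z) = - (LINT z|lborel. v z * \<psi> z)))"

definition weak_lap_ineq :: "bool \<Rightarrow> complex set \<Rightarrow> (complex \<Rightarrow> real) \<Rightarrow> (complex \<Rightarrow> real) \<Rightarrow> bool" where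
  "weak_lap_ineq sub V u f \<longleftrightarrow>
     (\<forall>\<psi>. test_fn V \<psi> \<and> (\<forall>z. \<psi> z \<ge> 0) \<longrightarrow>
        (if sub then (LINT z|lborel. u z * laplacian \<psi> z) \<ge> (LINT z|lborel. f z * \<psi> z)
                else (LINT z|lborel. u z * laplacian \<psi> z) \<le> (LINT z|lborel. f z * \<psi> z)))"

definition vortex_sol :: "bool \<Rightarrow> 'a chart set \<Rightarrow> nat \<Rightarrow> ('a chart \<Rightarrow> complex \<Rightarrow> complex)
    \<Rightarrow> ('a chart \<Rightarrow> complex \<Rightarrow> real) \<Rightarrow> bool" where
  "vortex_sol sub A k Phi G \<longleftrightarrow> conformal_metric A G \<and>
     (\<forall>c\<in>A. let V = snd c ` fst c; u = (\<lambda>x. ln (G c x)) in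
        H1_loc V u \<and>
        weak_lap_ineq sub V u
          (\<lambda>x. 2 * (exp (u x) - exp ((1 - real k) * u x) * (cmod (Phi c x))\<^sup>2)))"

abbreviation vortex_subsol where "vortex_subsol \<equiv> vortex_sol True"
abbreviation vortex_supersol where "vortex_supersol \<equiv> vortex_sol False"

text \<open>The conformal ratio g1/g2 as a function on the surface (independent of the chart).\<close>
definition metric_ratio :: "'a chart set \<Rightarrow> ('a chart \<Rightarrow> complex \<Rightarrow> real)
    \<Rightarrow> ('a chart \<Rightarrow> complex \<Rightarrow> real) \<Rightarrow> 'a \<Rightarrow> real" where
  "metric_ratio A G1 G2 p = (let c = (SOME c. c \<in> A \<and> p \<in> fst c) in G1 c (snd c p) / G2 c (snd c p))"

definition is_local_max :: "('a::topological_space \<Rightarrow> real) \<Rightarrow> 'a \<Rightarrow> bool" where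
  "is_local_max f p \<longleftrightarrow> (\<exists>W. open W \<and> p \<in> W \<and> (\<forall>q\<in>W. f q \<le> f p))"

end

theory Submission
  imports Defs
begin

text \<open>In a chart write \<open>g\<^sub>- = e^u\<^sub>- |dz|^2\<close>, \<open>g\<^sub>+ = e^u\<^sub>+ |dz|^2\<close> and \<open>w = u\<^sub>- - u\<^sub>+ = ln (g\<^sub>- / g\<^sub>+)\<close>.
  Then \<open>\<Delta>w \<ge> f(u\<^sub>-) - f(u\<^sub>+)\<close> weakly, where \<open>f(u) = 2 (e^u - e^((1-k) u) |\<phi>|^2)\<close> is strictly
  increasing for \<open>k \<ge> 1\<close>. At a local maximum of \<open>w\<close> with \<open>w > 0\<close> the right-hand side is positive, which
  a weak maximum principle forbids; it is proved by testing against a smoothed Green function of a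
  small disc, whose Laplacian is a difference of two mollifiers.

  At a local maximum with \<open>w = 0\<close>, \<open>h = -w \<ge> 0\<close> satisfies \<open>\<Delta>h \<le> K h\<close> weakly since \<open>f\<close> is locally
  Lipschitz. If \<open>h\<close> did not vanish near the point, the barrier \<open>e^(-\<alpha> |z - y|^2) - e^(-\<alpha> R^2)\<close> on a
  disc touching the zero set of \<open>h\<close> at \<open>q\<close> would force \<open>h\<close> to grow linearly away from \<open>q\<close>
  (Hopf lemma), while the Green function test at \<open>q\<close> bounds the mean of \<open>h\<close> on \<open>r\<close>-discs by \<open>o(r)\<close>.\<close>

section \<open>Smooth functions of a real variable\<close>

definition smooth_real :: "(real \<Rightarrow> real) \<Rightarrow> bool" where
  "smooth_real f \<longleftrightarrow> (\<forall>n x. ((deriv ^^ n) f) field_differentiable (at x))"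

lemma smooth_real_differentiable: "smooth_real f \<Longrightarrow> f field_differentiable (at x)"
  unfolding smooth_real_def by (metis funpow_0)

lemma smooth_real_DERIV: "smooth_real f \<Longrightarrow> (f has_real_derivative deriv f x) (at x)"
  using smooth_real_differentiable DERIV_deriv_iff_field_differentiable by blast

lemma smooth_real_deriv: "smooth_real f \<Longrightarrow> smooth_real (deriv f)"
  unfolding smooth_real_def by (metis funpow_Suc_right o_apply)

lemma smooth_realI: "(\<And>x. f field_differentiable (at x)) \<Longrightarrow> smooth_real (deriv f) \<Longrightarrow> smooth_real f"
  unfolding smooth_real_def
  by (metis funpow_Suc_right o_apply not0_implies_Suc funpow_0)

lemma smooth_real_continuous: "smooth_real f \<Longrightarrow> continuous_on UNIV f"
  by (meson continuous_at_imp_continuous_on field_differentiable_imp_continuous_at smooth_real_differentiable)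

text \<open>Smoothness is proved by exhibiting a family of differentiable functions whose
  derivatives lie in the algebra it generates; that algebra is then closed under \<open>deriv\<close>.\<close>
inductive fun_alg :: "(real \<Rightarrow> real) set \<Rightarrow> (real \<Rightarrow> real) \<Rightarrow> bool" for G where
  gen: "g \<in> G \<Longrightarrow> fun_alg G g"
| const: "fun_alg G (\<lambda>x. c)"
| add: "fun_alg G f \<Longrightarrow> fun_alg G g \<Longrightarrow> fun_alg G (\<lambda>x. f x + g x)"
| mul: "fun_alg G f \<Longrightarrow> fun_alg G g \<Longrightarrow> fun_alg G (\<lambda>x. f x * g x)"

lemma fun_alg_deriv:
  assumes G: "\<And>g. g \<in> G \<Longrightarrow> (\<forall>x. g field_differentiable (at x)) \<and> fun_alg G (deriv g)"
  shows "fun_alg G f \<Longrightarrow> (\<forall>x. f field_differentiable (at x)) \<and> fun_alg G (deriv f)"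
proof (induction rule: fun_alg.induct)
  case (gen g) then show ?case using G by blast
next
  case (const c)
  have "deriv (\<lambda>x. c) = (\<lambda>x. 0)" by (rule ext) simp
  then show ?case by (auto intro: fun_alg.const)
next
  case (add f g)
  have "deriv (\<lambda>x. f x + g x) = (\<lambda>x. deriv f x + deriv g x)"
    using add by (intro ext deriv_add) auto
  then show ?case using add by (auto intro!: fun_alg.add field_differentiable_add)
next
  case (mul f g)
  have "deriv (\<lambda>x. f x * g x) = (\<lambda>x. f x * deriv g x + deriv f x * g x)"
    using mul by (intro ext deriv_mult) auto
  then show ?case using mul by (auto intro!: fun_alg.add fun_alg.mul field_differentiable_mult)
qed

lemma fun_alg_smooth_real:
  assumes G: "\<And>g. g \<in> G \<Longrightarrow> (\<forall>x. g field_differentiable (at x)) \<and> fun_alg G (deriv g)"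
    and f: "fun_alg G f"
  shows "smooth_real f"
proof -
  have "fun_alg G ((deriv ^^ n) f)" for n
    by (induction n) (use f fun_alg_deriv[OF G] in auto)
  then show ?thesis unfolding smooth_real_def using fun_alg_deriv[OF G] by blast
qed

lemma smooth_real_fun_alg: "fun_alg (Collect smooth_real) f \<Longrightarrow> smooth_real f"
  by (rule fun_alg_smooth_real) (auto intro: fun_alg.gen smooth_real_differentiable smooth_real_deriv)

lemma smooth_real_const: "smooth_real (\<lambda>x. c)" by (rule smooth_real_fun_alg) (rule fun_alg.const)

lemma smooth_real_add: "smooth_real f \<Longrightarrow> smooth_real g \<Longrightarrow> smooth_real (\<lambda>x. f x + g x)"
  by (rule smooth_real_fun_alg) (auto intro: fun_alg.intros)

lemma smooth_real_mult: "smooth_real f \<Longrightarrow> smooth_real g \<Longrightarrow> smooth_real (\<lambda>x. f x * g x)"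
  by (rule smooth_real_fun_alg) (auto intro: fun_alg.intros)

lemma smooth_real_ident: "smooth_real (\<lambda>x. x)"
proof (rule smooth_realI)
  show "smooth_real (deriv (\<lambda>x. x))" using smooth_real_const by (simp add: deriv_ident[abs_def])
qed (rule field_differentiable_ident)

lemma smooth_real_diff: "smooth_real f \<Longrightarrow> smooth_real g \<Longrightarrow> smooth_real (\<lambda>x. f x - g x)"
  using smooth_real_add[of f "\<lambda>x. (-1) * g x"] smooth_real_mult[OF smooth_real_const, of g "-1"] by simp

lemma smooth_real_inverse:
  assumes g: "smooth_real g" and nz: "\<And>x. g x \<noteq> 0"
  shows "smooth_real (\<lambda>x. inverse (g x))"
proof (rule fun_alg_smooth_real[where G="Collect smooth_real \<union> {\<lambda>x. inverse (g x)}"])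
  fix h assume "h \<in> Collect smooth_real \<union> {\<lambda>x. inverse (g x)}"
  then show "(\<forall>x. h field_differentiable (at x)) \<and> fun_alg (Collect smooth_real \<union> {\<lambda>x. inverse (g x)}) (deriv h)"
  proof
    assume "h \<in> Collect smooth_real" then show ?thesis by (auto intro: fun_alg.gen smooth_real_differentiable smooth_real_deriv)
  next
    assume h: "h \<in> {\<lambda>x. inverse (g x)}"
    have d: "((\<lambda>x. inverse (g x)) has_real_derivative - (deriv g x * (inverse (g x) * inverse (g x)))) (at x)" for x
      using DERIV_inverse_fun[OF smooth_real_DERIV[OF g] nz, of x] by (simp add: power2_eq_square divide_inverse mult.commute)
    have "deriv (\<lambda>x. inverse (g x)) = (\<lambda>x. (-1) * (deriv g x * (inverse (g x) * inverse (g x))))"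
      using d by (intro ext DERIV_imp_deriv) simp
    moreover have "fun_alg (Collect smooth_real \<union> {\<lambda>x. inverse (g x)}) (\<lambda>x. (-1) * (deriv g x * (inverse (g x) * inverse (g x))))"
      by (intro fun_alg.intros) (auto simp: smooth_real_deriv[OF g])
    ultimately show ?thesis using h d field_differentiable_def by fastforce
  qed
qed (rule fun_alg.gen, simp)

lemma smooth_real_affine:
  assumes "smooth_real f" shows "smooth_real (\<lambda>x. f (a * x + c))"
proof (rule fun_alg_smooth_real[where G="{h. \<exists>f. smooth_real f \<and> h = (\<lambda>x. f (a * x + c))}"])
  fix h assume "h \<in> {h. \<exists>f. smooth_real f \<and> h = (\<lambda>x. f (a * x + c))}"
  then obtain f where f: "smooth_real f" "h = (\<lambda>x. f (a * x + c))" by blast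
  have d: "(h has_real_derivative deriv f (a * x + c) * a) (at x)" for x
    unfolding f(2) by (rule DERIV_chain2[OF smooth_real_DERIV[OF f(1)]]) (auto intro!: derivative_eq_intros)
  have "deriv h = (\<lambda>x. a * deriv f (a * x + c))"
    using d by (intro ext DERIV_imp_deriv) (simp add: mult.commute)
  moreover have "fun_alg {h. \<exists>f. smooth_real f \<and> h = (\<lambda>x. f (a * x + c))} (\<lambda>x. a * deriv f (a * x + c))"
    by (intro fun_alg.intros) (auto intro: smooth_real_deriv[OF f(1)])
  ultimately show "(\<forall>x. h field_differentiable (at x)) \<and> fun_alg {h. \<exists>f. smooth_real f \<and> h = (\<lambda>x. f (a * x + c))} (deriv h)"
    using d field_differentiable_def by fastforce
qed (auto intro: fun_alg.gen assms)

lemma smooth_real_antiderivative: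
  assumes "\<And>x. (P has_real_derivative k x) (at x)" "smooth_real k"
  shows "smooth_real P"
proof (rule smooth_realI)
  show "P field_differentiable at x" for x using assms(1) field_differentiable_def by blast
  have "deriv P = k" using assms(1) by (intro ext DERIV_imp_deriv) auto
  then show "smooth_real (deriv P)" using assms(2) by simp
qed

definition flat_exp :: "nat \<Rightarrow> real \<Rightarrow> real" where
  "flat_exp n x = (if x > 0 then exp (- inverse x) / x ^ n else 0)"

lemma flat_exp_tendsto_0: "(flat_exp n \<longlongrightarrow> 0) (at 0)"
proof -
  have r: "(flat_exp n \<longlongrightarrow> 0) (at_right 0)"
  proof -
    have "((\<lambda>y. y ^ n / exp y) \<longlongrightarrow> (0::real)) at_top" by (rule tendsto_power_div_exp_0)
    then have "((\<lambda>x. inverse x ^ n / exp (inverse x)) \<longlongrightarrow> (0::real)) (at_right 0)"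
      using filterlim_compose filterlim_inverse_at_top_right by blast
    then show ?thesis
      by (rule Lim_transform_eventually)
         (auto simp: eventually_at_right_less flat_exp_def exp_minus power_inverse field_simps
               intro!: eventually_mono[OF eventually_at_right_less[of 0]])
  qed
  have l: "(flat_exp n \<longlongrightarrow> 0) (at_left 0)"
    by (rule Lim_transform_eventually[of "\<lambda>_. 0"]) (auto simp: flat_exp_def eventually_at_filter)
  show ?thesis using r l by (simp add: filterlim_split_at)
qed

lemma flat_exp_DERIV:
  "(flat_exp n has_real_derivative (flat_exp (n+2) x - real n * flat_exp (n+1) x)) (at x)"
proof (cases "x > 0")
  case True
  have "((\<lambda>x. exp (- inverse x) / x ^ n) has_real_derivative (flat_exp (n+2) x - real n * flat_exp (n+1) x)) (at x)"
    using True
    by (auto intro!: derivative_eq_intros simp: flat_exp_def field_simps power2_eq_square)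
       (cases n; simp add: field_simps)
  then show ?thesis
    apply (rule has_field_derivative_transform_within_open[where S="{0<..}"])
    using True by (auto simp: flat_exp_def)
next
  case False
  show ?thesis
  proof (cases "x < 0")
    case True
    have "((\<lambda>_. 0) has_real_derivative flat_exp (n+2) x - real n * flat_exp (n+1) x) (at x)"
      using True by (simp add: flat_exp_def)
    then show ?thesis
      apply (rule has_field_derivative_transform_within_open[where S="{..<0}"])
      using True by (auto simp: flat_exp_def)
  next
    case False
    with \<open>\<not> x > 0\<close> have x: "x = 0" by simp
    have "((\<lambda>h. (flat_exp n (0 + h) - flat_exp n 0) / h) \<longlongrightarrow> 0) (at 0)"
    proof (rule Lim_transform_eventually[OF flat_exp_tendsto_0[of "n+1"]])
      show "\<forall>\<^sub>F h in at 0. flat_exp (n + 1) h = (flat_exp n (0 + h) - flat_exp n 0) / h"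
        by (auto simp: flat_exp_def eventually_at_filter)
    qed
    then show ?thesis using x by (simp add: DERIV_def flat_exp_def)
  qed
qed

lemma deriv_flat_exp: "deriv (flat_exp n) = (\<lambda>x. flat_exp (n+2) x + (- real n) * flat_exp (n+1) x)"
  using flat_exp_DERIV by (intro ext DERIV_imp_deriv) simp

lemma smooth_real_flat_exp: "smooth_real (flat_exp n)"
proof (rule fun_alg_smooth_real[where G="range flat_exp"])
  fix g assume "g \<in> range flat_exp"
  then obtain m where g: "g = flat_exp m" by auto
  show "(\<forall>x. g field_differentiable (at x)) \<and> fun_alg (range flat_exp) (deriv g)"
  proof
    show "\<forall>x. g field_differentiable (at x)" unfolding g using flat_exp_DERIV field_differentiable_def by blast
    show "fun_alg (range flat_exp) (deriv g)" unfolding g deriv_flat_exp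
      by (intro fun_alg.add fun_alg.mul fun_alg.const fun_alg.gen) auto
  qed
qed (auto intro: fun_alg.gen)

lemma flat_exp_nonneg: "flat_exp n x \<ge> 0" by (simp add: flat_exp_def)

lemma flat_exp_pos: "x > 0 \<Longrightarrow> flat_exp n x > 0" by (simp add: flat_exp_def)

lemma flat_exp_eq_0: "x \<le> 0 \<Longrightarrow> flat_exp n x = 0" by (simp add: flat_exp_def)

text \<open>For \<open>t < 0\<close> the interval \<open>{0..t}\<close> is empty, so \<open>antideriv0 k\<close> is an antiderivative
  of \<open>k\<close> only when \<open>k\<close> vanishes on the negative axis.\<close>
definition antideriv0 :: "(real \<Rightarrow> real) \<Rightarrow> real \<Rightarrow> real" where
  "antideriv0 k t = integral {0..t} k"

lemma antideriv0_DERIV: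
  assumes k0: "\<And>x. x \<le> 0 \<Longrightarrow> k x = 0" and kc: "continuous_on UNIV k"
  shows "(antideriv0 k has_real_derivative k x) (at x)"
proof (cases "x < 0")
  case True
  have "((\<lambda>_. 0) has_real_derivative k x) (at x)" using k0 True by simp
  then show ?thesis
    apply (rule has_field_derivative_transform_within_open[where S="{..<0}"])
    using True by (auto simp: antideriv0_def)
next
  case False
  have eq: "antideriv0 k t = integral {-1..t} k" if "t > -1" for t
  proof (cases "t \<ge> 0")
    case True
    have "integral {-1..t} k = integral {-1..0} k + integral {0..t} k"
      using True by (intro Henstock_Kurzweil_Integration.integral_combine[symmetric])
        (auto intro!: integrable_continuous_real continuous_on_subset[OF kc])
    moreover have "integral {-1..0} k = integral {-1..0} (\<lambda>_::real. 0::real)"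
      by (intro Henstock_Kurzweil_Integration.integral_cong) (use k0 in auto)
    ultimately show ?thesis by (simp add: antideriv0_def)
  next
    case f: False
    have "integral {-1..t} k = integral {-1..t} (\<lambda>_. 0)" by (intro Henstock_Kurzweil_Integration.integral_cong) (use k0 f in auto)
    then show ?thesis using f by (simp add: antideriv0_def)
  qed
  have "((\<lambda>t. integral {-1..t} k) has_real_derivative k x) (at x within {-1..x+1})"
    using False by (intro integral_has_real_derivative continuous_on_subset[OF kc]) auto
  then have "((\<lambda>t. integral {-1..t} k) has_real_derivative k x) (at x)"
    using False by (subst (asm) at_within_interior) (auto simp: interior_atLeastAtMost_real)
  then show ?thesis
    apply (rule has_field_derivative_transform_within_open[where S="{-1<..}"])
    using False eq by auto
qed

definition bump :: "real \<Rightarrow> real" where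
  "bump x = flat_exp 0 (x - 1/4) * flat_exp 0 (1 - x)"

lemma smooth_real_bump: "smooth_real bump"
proof -
  have "smooth_real (\<lambda>x. flat_exp 0 (1 * x + (-1/4)))" by (rule smooth_real_affine[OF smooth_real_flat_exp])
  moreover have "smooth_real (\<lambda>x. flat_exp 0 ((-1) * x + 1))" by (rule smooth_real_affine[OF smooth_real_flat_exp])
  ultimately have "smooth_real (\<lambda>x. flat_exp 0 (1 * x + (-1/4)) * flat_exp 0 ((-1) * x + 1))" by (rule smooth_real_mult)
  then show ?thesis unfolding bump_def[abs_def] by simp
qed

lemma continuous_bump: "continuous_on UNIV bump" using smooth_real_continuous smooth_real_bump by blast

lemma bump_nonneg: "bump x \<ge> 0" by (simp add: bump_def flat_exp_nonneg)

lemma bump_eq_0: "x \<le> 1/4 \<or> x \<ge> 1 \<Longrightarrow> bump x = 0" by (auto simp: bump_def flat_exp_eq_0)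

lemma bump_pos: "1/4 < x \<Longrightarrow> x < 1 \<Longrightarrow> bump x > 0" by (simp add: bump_def flat_exp_pos)

definition bump_mass :: real where "bump_mass = integral {0..1} bump"

lemma bump_mass_pos: "bump_mass > 0"
proof -
  have "bump_mass \<ge> 0" unfolding bump_mass_def
    by (intro integral_nonneg integrable_continuous_real continuous_on_subset[OF continuous_bump]) (auto simp: bump_nonneg)
  moreover have "bump_mass \<noteq> 0"
  proof
    assume "bump_mass = 0"
    then have "\<forall>x\<in>{0..1}. bump x = 0" unfolding bump_mass_def
      by (subst (asm) integral_eq_0_iff) (auto intro: continuous_on_subset[OF continuous_bump] bump_nonneg)
    then show False using bump_pos[of "1/2"] by auto
  qed
  ultimately show ?thesis by simp
qed

definition smooth_step :: "real \<Rightarrow> real" where "smooth_step t = antideriv0 bump t / bump_mass"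

lemma smooth_step_DERIV: "(smooth_step has_real_derivative bump x / bump_mass) (at x)"
  unfolding smooth_step_def[abs_def]
  by (intro DERIV_cdivide antideriv0_DERIV continuous_bump) (auto simp: bump_eq_0)

lemma smooth_real_smooth_step: "smooth_real smooth_step"
  by (rule smooth_real_antiderivative[OF smooth_step_DERIV]) (simp add: divide_inverse smooth_real_mult smooth_real_bump smooth_real_const)

lemma smooth_step_eq_0: "t \<le> 1/4 \<Longrightarrow> smooth_step t = 0"
proof -
  assume t: "t \<le> 1/4"
  have "integral {0..t} bump = integral {0..t} (\<lambda>_::real. 0::real)"
    by (intro Henstock_Kurzweil_Integration.integral_cong) (use t in \<open>auto simp: bump_eq_0\<close>)
  then show ?thesis by (simp add: smooth_step_def antideriv0_def)
qed

lemma smooth_step_eq_1: "t \<ge> 1 \<Longrightarrow> smooth_step t = 1"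
proof -
  assume t: "t \<ge> 1"
  have "integral {0..t} bump = integral {0..1} bump + integral {1..t} bump"
    using t by (intro Henstock_Kurzweil_Integration.integral_combine[symmetric])
        (auto intro!: integrable_continuous_real continuous_on_subset[OF continuous_bump])
  moreover have "integral {1..t} bump = integral {1..t} (\<lambda>_::real. 0::real)"
    by (intro Henstock_Kurzweil_Integration.integral_cong) (auto simp: bump_eq_0)
  ultimately show ?thesis using bump_mass_pos by (simp add: smooth_step_def antideriv0_def bump_mass_def)
qed

lemma smooth_step_mono: "s \<le> t \<Longrightarrow> smooth_step s \<le> smooth_step t"
proof (rule DERIV_nonneg_imp_nondecreasing[of s t smooth_step])
  fix x show "\<exists>y. (smooth_step has_real_derivative y) (at x) \<and> y \<ge> 0"
    using smooth_step_DERIV[of x] bump_mass_pos bump_nonneg[of x] by (intro exI[of _ "bump x / bump_mass"]) auto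
qed

lemma smooth_step_le_1: "smooth_step t \<le> 1"
  using smooth_step_mono[of t "max t 1"] smooth_step_eq_1[of "max t 1"] by auto

text \<open>\<open>step_denom\<close> equals \<open>t\<^sup>2\<close> where \<open>smooth_step\<close> is nonzero and is positive everywhere,
  so \<open>step_quot = smooth_step t / t\<close> is smooth across \<open>t = 0\<close>.\<close>
definition step_denom :: "real \<Rightarrow> real" where "step_denom t = t * t + flat_exp 0 (1/4 - t)"

lemma step_denom_pos: "step_denom t > 0"
proof (cases "t < 1/4")
  case True then show ?thesis using flat_exp_pos[of "1/4 - t" 0] by (simp add: step_denom_def add_nonneg_pos)
next
  case False then have "t > 0" by simp
  then show ?thesis using flat_exp_nonneg[of 0 "1/4 - t"] by (simp add: step_denom_def add_pos_nonneg)
qed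

lemma smooth_real_step_denom: "smooth_real step_denom"
proof -
  have "smooth_real (\<lambda>x. flat_exp 0 ((-1) * x + 1/4))" by (rule smooth_real_affine[OF smooth_real_flat_exp])
  then have "smooth_real (\<lambda>x. x * x + flat_exp 0 ((-1) * x + 1/4))" by (intro smooth_real_add smooth_real_mult smooth_real_ident)
  then show ?thesis unfolding step_denom_def[abs_def] by simp
qed

definition step_quot :: "real \<Rightarrow> real" where "step_quot t = smooth_step t * t * inverse (step_denom t)"

lemma smooth_real_step_quot: "smooth_real step_quot"
proof -
  have nz: "step_denom x \<noteq> 0" for x using step_denom_pos[of x] by linarith
  show ?thesis unfolding step_quot_def[abs_def]
    by (rule smooth_real_mult[OF smooth_real_mult[OF smooth_real_smooth_step smooth_real_ident] smooth_real_inverse[OF smooth_real_step_denom nz]])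
qed

lemma step_quot_eq: "t \<ge> 1/4 \<Longrightarrow> step_quot t = smooth_step t / t"
proof -
  assume t: "t \<ge> 1/4"
  then have "step_denom t = t * t" by (simp add: step_denom_def flat_exp_eq_0)
  moreover have "t \<noteq> 0" using t by auto
  ultimately show ?thesis by (simp add: step_quot_def field_simps)
qed

lemma step_quot_eq_0: "t \<le> 1/4 \<Longrightarrow> step_quot t = 0"
  by (simp add: step_quot_def smooth_step_eq_0)

lemma mult_step_quot: "t * step_quot t = smooth_step t"
  by (cases "t \<ge> 1/4") (auto simp: step_quot_eq step_quot_eq_0 smooth_step_eq_0)

lemma step_quot_le: "t > 0 \<Longrightarrow> step_quot t \<le> 1 / t"
  by (cases "t \<ge> 1/4") (auto simp: step_quot_eq step_quot_eq_0 smooth_step_le_1 divide_right_mono)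

lemma step_quot_eq_inverse: "t \<ge> 1 \<Longrightarrow> step_quot t = 1 / t"
  by (simp add: step_quot_eq smooth_step_eq_1)

lemma step_quot_identity: "step_quot x + x * deriv step_quot x = bump x / bump_mass"
proof -
  have "((\<lambda>t. t * step_quot t) has_real_derivative 1 * step_quot x + x * deriv step_quot x) (at x)"
    by (rule DERIV_cong[OF DERIV_mult[OF DERIV_ident smooth_real_DERIV[OF smooth_real_step_quot]]]) simp
  moreover have "((\<lambda>t. t * step_quot t) has_real_derivative bump x / bump_mass) (at x)"
    unfolding mult_step_quot by (rule smooth_step_DERIV)
  ultimately show ?thesis using DERIV_unique by fastforce
qed

definition log_profile :: "real \<Rightarrow> real" where "log_profile = antideriv0 step_quot"

lemma log_profile_DERIV: "(log_profile has_real_derivative step_quot x) (at x)"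
  unfolding log_profile_def by (rule antideriv0_DERIV) (auto simp: step_quot_eq_0 smooth_real_continuous smooth_real_step_quot)

lemma smooth_real_log_profile: "smooth_real log_profile" by (rule smooth_real_antiderivative[OF log_profile_DERIV smooth_real_step_quot])

lemma log_profile_eq_ln: "t \<ge> 1 \<Longrightarrow> log_profile t = log_profile 1 + ln t"
proof -
  assume t: "t \<ge> 1"
  have d: "((\<lambda>x. log_profile x - ln x) has_real_derivative 0) (at x)" if "1 \<le> x" for x
      using log_profile_DERIV[of x] step_quot_eq_inverse[of x] that
      by (auto intro!: derivative_eq_intros)
  have "log_profile t - ln t = log_profile 1 - ln 1"
  proof (cases "t = 1")
    case False
    show ?thesis
    proof (rule DERIV_isconst2[of 1 t])
      show "continuous_on {1..t} (\<lambda>x. log_profile x - ln x)"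
        using d by (meson DERIV_continuous atLeastAtMost_iff continuous_at_imp_continuous_on)
    qed (use t False d in auto)
  qed simp
  then show ?thesis by simp
qed

lemma log_profile_diff_le: "0 < x \<Longrightarrow> x \<le> y \<Longrightarrow> log_profile y - log_profile x \<le> ln y - ln x"
proof -
  assume xy: "0 < x" "x \<le> y"
  have "log_profile y - ln y \<le> log_profile x - ln x"
  proof (rule DERIV_nonpos_imp_nonincreasing[of x y "\<lambda>t. log_profile t - ln t", simplified])
    show "x \<le> y" by fact
    fix t assume t0: "x \<le> t" "t \<le> y"
    then have t: "x \<le> t \<and> t \<le> y" by simp
    then have "((\<lambda>t. log_profile t - ln t) has_real_derivative step_quot t - 1 / t) (at t)"
      using xy log_profile_DERIV by (auto intro!: derivative_eq_intros simp: divide_inverse)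
    moreover have "step_quot t - 1 / t \<le> 0" using step_quot_le[of t] t xy by auto
    ultimately show "\<exists>y. ((\<lambda>t. log_profile t - ln t) has_real_derivative y) (at t) \<and> y \<le> 0" by blast
  qed
  then show ?thesis by simp
qed

lemma log_profile_eq_0: "x \<le> 1/4 \<Longrightarrow> log_profile x = 0"
proof -
  assume x: "x \<le> 1/4"
  have "integral {0..x} step_quot = integral {0..x} (\<lambda>_::real. 0::real)"
    by (intro Henstock_Kurzweil_Integration.integral_cong) (use x in \<open>auto simp: step_quot_eq_0\<close>)
  then show ?thesis by (simp add: log_profile_def antideriv0_def)
qed

section \<open>Radial functions in the plane\<close>

definition has_partials :: "(complex \<Rightarrow> real) \<Rightarrow> bool" where
  "has_partials f \<longleftrightarrow> continuous_on UNIV f \<and>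
     (\<forall>z. \<forall>e\<in>{1, \<i>}. (\<lambda>t::real. f (z + of_real t * e)) differentiable (at 0))"

inductive fun_alg2 :: "(complex \<Rightarrow> real) set \<Rightarrow> (complex \<Rightarrow> real) \<Rightarrow> bool" for G where
  gen: "g \<in> G \<Longrightarrow> fun_alg2 G g"
| const: "fun_alg2 G (\<lambda>x. c)"
| add: "fun_alg2 G f \<Longrightarrow> fun_alg2 G g \<Longrightarrow> fun_alg2 G (\<lambda>x. f x + g x)"
| mul: "fun_alg2 G f \<Longrightarrow> fun_alg2 G g \<Longrightarrow> fun_alg2 G (\<lambda>x. f x * g x)"

lemma pd_DERIV:
  "(\<lambda>t::real. f (z + of_real t * e)) differentiable (at 0) \<Longrightarrow>
   ((\<lambda>t::real. f (z + of_real t * e)) has_real_derivative pd e f z) (at 0)"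
  unfolding pd_def using DERIV_deriv_iff_real_differentiable by blast

lemma pd_eqI: "((\<lambda>t::real. f (z + of_real t * e)) has_real_derivative D) (at 0) \<Longrightarrow> pd e f z = D"
  unfolding pd_def by (rule DERIV_imp_deriv)

lemma fun_alg2_pd:
  assumes G: "\<And>g. g \<in> G \<Longrightarrow> has_partials g \<and> fun_alg2 G (pd 1 g) \<and> fun_alg2 G (pd \<i> g)"
  shows "fun_alg2 G f \<Longrightarrow> has_partials f \<and> fun_alg2 G (pd 1 f) \<and> fun_alg2 G (pd \<i> f)"
proof (induction rule: fun_alg2.induct)
  case (gen g) then show ?case using G by blast
next
  case (const c)
  have "pd e (\<lambda>x. c) = (\<lambda>x. 0)" for e by (rule ext, rule pd_eqI) simp
  then show ?case by (auto simp: has_partials_def intro: fun_alg2.const)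
next
  case (add f g)
  have "pd e (\<lambda>x. f x + g x) = (\<lambda>x. pd e f x + pd e g x)" if "e \<in> {1, \<i>}" for e
  proof (rule ext, rule pd_eqI)
    fix z
    show "((\<lambda>t. f (z + complex_of_real t * e) + g (z + complex_of_real t * e)) has_real_derivative pd e f z + pd e g z) (at 0)"
      using add that unfolding has_partials_def by (intro DERIV_add pd_DERIV) auto
  qed
  moreover have "has_partials (\<lambda>x. f x + g x)" using add unfolding has_partials_def
    by (auto intro!: continuous_on_add differentiable_add)
  ultimately show ?case using add by (auto intro!: fun_alg2.add)
next
  case (mul f g)
  have "pd e (\<lambda>x. f x * g x) = (\<lambda>x. pd e f x * g x + f x * pd e g x)" if "e \<in> {1, \<i>}" for e
  proof (rule ext, rule pd_eqI)
    fix z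
    have df: "(\<lambda>t::real. f (z + of_real t * e)) differentiable (at 0)"
      and dg: "(\<lambda>t::real. g (z + of_real t * e)) differentiable (at 0)"
      using mul that unfolding has_partials_def by auto
    show "((\<lambda>t. f (z + complex_of_real t * e) * g (z + complex_of_real t * e)) has_real_derivative pd e f z * g z + f z * pd e g z) (at 0)"
      by (rule DERIV_cong[OF DERIV_mult[OF pd_DERIV[OF df] pd_DERIV[OF dg]]]) (simp add: algebra_simps)
  qed
  moreover have "has_partials (\<lambda>x. f x * g x)" using mul unfolding has_partials_def
    by (auto intro!: continuous_on_mult differentiable_mult)
  ultimately show ?case using mul by (auto intro!: fun_alg2.add fun_alg2.mul)
qed

lemma fun_alg2_smooth_fn:
  assumes G: "\<And>g. g \<in> G \<Longrightarrow> has_partials g \<and> fun_alg2 G (pd 1 g) \<and> fun_alg2 G (pd \<i> g)"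
    and f: "fun_alg2 G f"
  shows "smooth_fn f"
proof -
  have "fun_alg2 G (iter_pd bs f)" for bs
    by (induction bs) (use f fun_alg2_pd[OF G] in auto)
  then show ?thesis unfolding smooth_fn_def using fun_alg2_pd[OF G] has_partials_def by blast
qed

lemma cmod_power2_Re_Im: "(cmod w)\<^sup>2 = (Re w)\<^sup>2 + (Im w)\<^sup>2"
  by (simp add: cmod_def)

lemma radial_DERIV_Re:
  assumes D: "\<And>x. (D has_real_derivative D1 x) (at x)"
  shows "((\<lambda>t::real. D (c * (cmod (z + of_real t * 1 - z0))\<^sup>2)) has_real_derivative
           D1 (c * (cmod (z - z0))\<^sup>2) * (2 * c * (Re z - Re z0))) (at 0)"
proof -
  have e: "(\<lambda>t::real. D (c * (cmod (z + of_real t * 1 - z0))\<^sup>2)) =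
     (\<lambda>t. D (c * ((Re z - Re z0 + t)\<^sup>2 + (Im z - Im z0)\<^sup>2)))"
    by (rule ext) (simp add: cmod_power2_Re_Im algebra_simps)
  have inner: "((\<lambda>t. c * ((Re z - Re z0 + t)\<^sup>2 + (Im z - Im z0)\<^sup>2)) has_real_derivative 2 * c * (Re z - Re z0)) (at 0)"
    by (auto intro!: derivative_eq_intros)
  have "((\<lambda>t. D ((\<lambda>t. c * ((Re z - Re z0 + t)\<^sup>2 + (Im z - Im z0)\<^sup>2)) t)) has_real_derivative D1 ((\<lambda>t. c * ((Re z - Re z0 + t)\<^sup>2 + (Im z - Im z0)\<^sup>2)) 0) * (2 * c * (Re z - Re z0))) (at 0)"
    by (rule DERIV_chain2[OF D inner])
  then show ?thesis unfolding e by (simp add: cmod_power2_Re_Im algebra_simps)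
qed

lemma radial_DERIV_Im:
  assumes D: "\<And>x. (D has_real_derivative D1 x) (at x)"
  shows "((\<lambda>t::real. D (c * (cmod (z + of_real t * \<i> - z0))\<^sup>2)) has_real_derivative
           D1 (c * (cmod (z - z0))\<^sup>2) * (2 * c * (Im z - Im z0))) (at 0)"
proof -
  have e: "(\<lambda>t::real. D (c * (cmod (z + of_real t * \<i> - z0))\<^sup>2)) =
     (\<lambda>t. D (c * ((Re z - Re z0)\<^sup>2 + (Im z - Im z0 + t)\<^sup>2)))"
    by (rule ext) (simp add: cmod_power2_Re_Im algebra_simps)
  have inner: "((\<lambda>t. c * ((Re z - Re z0)\<^sup>2 + (Im z - Im z0 + t)\<^sup>2)) has_real_derivative 2 * c * (Im z - Im z0)) (at 0)"
    by (auto intro!: derivative_eq_intros)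
  have "((\<lambda>t. D ((\<lambda>t. c * ((Re z - Re z0)\<^sup>2 + (Im z - Im z0 + t)\<^sup>2)) t)) has_real_derivative D1 ((\<lambda>t. c * ((Re z - Re z0)\<^sup>2 + (Im z - Im z0 + t)\<^sup>2)) 0) * (2 * c * (Im z - Im z0))) (at 0)"
    by (rule DERIV_chain2[OF D inner])
  then show ?thesis unfolding e by (simp add: cmod_power2_Re_Im algebra_simps)
qed

lemma pd_Re_radial:
  assumes D: "\<And>x. (D has_real_derivative D1 x) (at x)"
  shows "pd 1 (\<lambda>z. D (c * (cmod (z - z0))\<^sup>2)) = (\<lambda>z. D1 (c * (cmod (z - z0))\<^sup>2) * (2 * c * (Re z - Re z0)))"
  by (rule ext, rule pd_eqI, rule radial_DERIV_Re[OF D])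

lemma pd_Im_radial:
  assumes D: "\<And>x. (D has_real_derivative D1 x) (at x)"
  shows "pd \<i> (\<lambda>z. D (c * (cmod (z - z0))\<^sup>2)) = (\<lambda>z. D1 (c * (cmod (z - z0))\<^sup>2) * (2 * c * (Im z - Im z0)))"
  by (rule ext, rule pd_eqI, rule radial_DERIV_Im[OF D])

lemma pd_Re_Re_diff: "pd 1 (\<lambda>z. Re z - a) = (\<lambda>z. 1)"
  by (rule ext, rule pd_eqI) (auto intro!: derivative_eq_intros)

lemma pd_Im_Re_diff: "pd \<i> (\<lambda>z. Re z - a) = (\<lambda>z. 0)"
  by (rule ext, rule pd_eqI) (auto intro!: derivative_eq_intros)

lemma pd_Re_Im_diff: "pd 1 (\<lambda>z. Im z - a) = (\<lambda>z. 0)"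
  by (rule ext, rule pd_eqI) (auto intro!: derivative_eq_intros)

lemma pd_Im_Im_diff: "pd \<i> (\<lambda>z. Im z - a) = (\<lambda>z. 1)"
  by (rule ext, rule pd_eqI) (auto intro!: derivative_eq_intros)

definition radial_gens :: "(complex \<Rightarrow> real) set" where
  "radial_gens = {g. \<exists>D c z0. smooth_real D \<and> g = (\<lambda>z. D (c * (cmod (z - z0))\<^sup>2))} \<union>
        {g. \<exists>a. g = (\<lambda>z. Re z - a) \<or> g = (\<lambda>z. Im z - a)}"

lemma radial_gens_pd: "g \<in> radial_gens \<Longrightarrow> has_partials g \<and> fun_alg2 radial_gens (pd 1 g) \<and> fun_alg2 radial_gens (pd \<i> g)"
proof -
  assume "g \<in> radial_gens"
  then consider (rad) D c z0 where "smooth_real D" "g = (\<lambda>z. D (c * (cmod (z - z0))\<^sup>2))"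
    | (re) a where "g = (\<lambda>z. Re z - a)" | (im) a where "g = (\<lambda>z. Im z - a)"
    unfolding radial_gens_def by blast
  then show ?thesis
  proof cases
    case rad
    note D = rad(1) and g = rad(2)
    have DD: "\<And>x. (D has_real_derivative deriv D x) (at x)" using smooth_real_DERIV[OF D] .
    have "has_partials g" unfolding has_partials_def g
    proof
      show "continuous_on UNIV (\<lambda>z. D (c * (cmod (z - z0))\<^sup>2))"
        by (intro continuous_on_compose2[OF smooth_real_continuous[OF D]] continuous_intros) auto
      show "\<forall>z. \<forall>e\<in>{1, \<i>}. (\<lambda>t. D (c * (cmod (z + complex_of_real t * e - z0))\<^sup>2)) differentiable at 0"
        using radial_DERIV_Re[OF DD] radial_DERIV_Im[OF DD] real_differentiable_def by blast
    qed
    moreover have m: "(\<lambda>z. deriv D (c * (cmod (z - z0))\<^sup>2)) \<in> radial_gens"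
      unfolding radial_gens_def using smooth_real_deriv[OF D] by blast
    have r: "(\<lambda>z. Re z - Re z0) \<in> radial_gens" "(\<lambda>z. Im z - Im z0) \<in> radial_gens" unfolding radial_gens_def by blast+
    have "fun_alg2 radial_gens (\<lambda>z. deriv D (c * (cmod (z - z0))\<^sup>2) * (2 * c * (Re z - Re z0)))"
      by (intro fun_alg2.mul fun_alg2.gen fun_alg2.const m r)
    moreover have "fun_alg2 radial_gens (\<lambda>z. deriv D (c * (cmod (z - z0))\<^sup>2) * (2 * c * (Im z - Im z0)))"
      by (intro fun_alg2.mul fun_alg2.gen fun_alg2.const m r)
    ultimately show ?thesis unfolding g pd_Re_radial[OF DD] pd_Im_radial[OF DD] by blast
  next
    case re
    have "has_partials g" unfolding has_partials_def re
      by (auto intro!: continuous_intros derivative_eq_intros simp: real_differentiable_def)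
    then show ?thesis unfolding re pd_Re_Re_diff pd_Im_Re_diff by (auto intro: fun_alg2.const)
  next
    case im
    have "has_partials g" unfolding has_partials_def im
      by (auto intro!: continuous_intros derivative_eq_intros simp: real_differentiable_def)
    then show ?thesis unfolding im pd_Re_Im_diff pd_Im_Im_diff by (auto intro: fun_alg2.const)
  qed
qed

lemma smooth_fn_radial: "smooth_real D \<Longrightarrow> smooth_fn (\<lambda>z. D (c * (cmod (z - z0))\<^sup>2))"
  by (rule fun_alg2_smooth_fn[OF radial_gens_pd]) (auto simp: radial_gens_def intro!: fun_alg2.gen)

lemma radial_second_Re:
  assumes D1: "\<And>x. (D1 has_real_derivative D2 x) (at x)"
  shows "((\<lambda>t. D1 ((cmod (z + of_real t * 1 - y))\<^sup>2) * (2 * (Re (z + of_real t * 1) - Re y))) has_real_derivative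
      D2 ((cmod (z - y))\<^sup>2) * (2 * (Re z - Re y)) * (2 * (Re z - Re y)) + 2 * D1 ((cmod (z - y))\<^sup>2)) (at 0)"
proof -
  have "((\<lambda>t. D1 (1 * (cmod (z + of_real t * 1 - y))\<^sup>2)) has_real_derivative
         D2 (1 * (cmod (z - y))\<^sup>2) * (2 * 1 * (Re z - Re y))) (at 0)"
    by (rule radial_DERIV_Re[OF D1])
  then have "((\<lambda>t. D1 ((cmod (z + of_real t * 1 - y))\<^sup>2) * (2 * (Re (z + of_real t * 1) - Re y))) has_real_derivative
      D2 ((cmod (z - y))\<^sup>2) * (2 * (Re z - Re y)) * (2 * (Re (z + of_real 0 * 1) - Re y)) + 2 * D1 ((cmod (z + of_real 0 * 1 - y))\<^sup>2)) (at 0)"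
    by (intro DERIV_cong[OF DERIV_mult]) (auto intro!: derivative_eq_intros)
  then show ?thesis by simp
qed

lemma radial_second_Im:
  assumes D1: "\<And>x. (D1 has_real_derivative D2 x) (at x)"
  shows "((\<lambda>t. D1 ((cmod (z + of_real t * \<i> - y))\<^sup>2) * (2 * (Im (z + of_real t * \<i>) - Im y))) has_real_derivative
      D2 ((cmod (z - y))\<^sup>2) * (2 * (Im z - Im y)) * (2 * (Im z - Im y)) + 2 * D1 ((cmod (z - y))\<^sup>2)) (at 0)"
proof -
  have "((\<lambda>t. D1 (1 * (cmod (z + of_real t * \<i> - y))\<^sup>2)) has_real_derivative
         D2 (1 * (cmod (z - y))\<^sup>2) * (2 * 1 * (Im z - Im y))) (at 0)"
    by (rule radial_DERIV_Im[OF D1])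
  then have "((\<lambda>t. D1 ((cmod (z + of_real t * \<i> - y))\<^sup>2) * (2 * (Im (z + of_real t * \<i>) - Im y))) has_real_derivative
      D2 ((cmod (z - y))\<^sup>2) * (2 * (Im z - Im y)) * (2 * (Im (z + of_real 0 * \<i>) - Im y)) + 2 * D1 ((cmod (z + of_real 0 * \<i> - y))\<^sup>2)) (at 0)"
    by (intro DERIV_cong[OF DERIV_mult]) (auto intro!: derivative_eq_intros)
  then show ?thesis by simp
qed

lemma laplacian_radial:
  assumes D: "\<And>x. (D has_real_derivative D1 x) (at x)"
    and D1: "\<And>x. (D1 has_real_derivative D2 x) (at x)"
  shows "laplacian (\<lambda>z. D ((cmod (z - y))\<^sup>2)) z =
     4 * ((cmod (z - y))\<^sup>2 * D2 ((cmod (z - y))\<^sup>2) + D1 ((cmod (z - y))\<^sup>2))"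
proof -
  have D': "\<And>x. ((\<lambda>x. D (1 * x)) has_real_derivative D1 x) (at x)" using D by simp
  have Re1: "pd 1 (\<lambda>z. D ((cmod (z - y))\<^sup>2)) = (\<lambda>z. D1 ((cmod (z - y))\<^sup>2) * (2 * (Re z - Re y)))"
    using pd_Re_radial[OF D', of 1 y] by simp
  have Im1: "pd \<i> (\<lambda>z. D ((cmod (z - y))\<^sup>2)) = (\<lambda>z. D1 ((cmod (z - y))\<^sup>2) * (2 * (Im z - Im y)))"
    using pd_Im_radial[OF D', of 1 y] by simp
  have Re2: "pd 1 (\<lambda>z. D1 ((cmod (z - y))\<^sup>2) * (2 * (Re z - Re y))) z =
      D2 ((cmod (z - y))\<^sup>2) * (2 * (Re z - Re y)) * (2 * (Re z - Re y)) + 2 * D1 ((cmod (z - y))\<^sup>2)"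
    by (rule pd_eqI) (rule radial_second_Re[OF D1])
  have Im2: "pd \<i> (\<lambda>z. D1 ((cmod (z - y))\<^sup>2) * (2 * (Im z - Im y))) z =
      D2 ((cmod (z - y))\<^sup>2) * (2 * (Im z - Im y)) * (2 * (Im z - Im y)) + 2 * D1 ((cmod (z - y))\<^sup>2)"
    by (rule pd_eqI) (rule radial_second_Im[OF D1])
  have r2: "(cmod (z - y))\<^sup>2 = (Re z - Re y)\<^sup>2 + (Im z - Im y)\<^sup>2" by (simp add: cmod_power2_Re_Im)
  show ?thesis
    unfolding laplacian_def iter_pd.simps if_False if_True Re1 Im1 Re2 Im2 r2
    by (simp add: algebra_simps power2_eq_square)
qed

section \<open>Smoothed Green functions and mollifiers\<close>

text \<open>A smoothing of the Green function \<open>2 ln (r / \<bar>z - z0\<bar>)\<close> of the disc \<open>cball z0 r\<close>,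
  cut off to the constant \<open>2 ln (r / e)\<close> near \<open>z0\<close>; its Laplacian is \<open>mollifier z0 r - mollifier z0 e\<close>.\<close>
definition green_profile :: "real \<Rightarrow> real \<Rightarrow> real \<Rightarrow> real" where
  "green_profile r e t = log_profile (t / r\<^sup>2) - log_profile (t / e\<^sup>2) + 2 * ln (r / e)"

definition green_cutoff :: "complex \<Rightarrow> real \<Rightarrow> real \<Rightarrow> complex \<Rightarrow> real" where
  "green_cutoff z0 r e z = green_profile r e ((cmod (z - z0))\<^sup>2)"

definition mollifier :: "complex \<Rightarrow> real \<Rightarrow> complex \<Rightarrow> real" where
  "mollifier z0 s z = 4 * bump ((cmod (z - z0))\<^sup>2 / s\<^sup>2) / (bump_mass * s\<^sup>2)"

lemma smooth_real_green_profile: "smooth_real (green_profile r e)"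
proof -
  have "smooth_real (\<lambda>t. log_profile (t / c))" for c
    using smooth_real_affine[OF smooth_real_log_profile, of "inverse c" 0] by (simp add: divide_inverse mult.commute)
  then show ?thesis
    unfolding green_profile_def[abs_def] by (intro smooth_real_add smooth_real_diff smooth_real_const)
qed

lemma smooth_fn_green_cutoff: "smooth_fn (green_cutoff z0 r e)"
  using smooth_fn_radial[OF smooth_real_green_profile, where c=1] by (simp add: green_cutoff_def[abs_def])

lemma continuous_green_cutoff: "continuous_on UNIV (green_cutoff z0 r e)"
  using smooth_fn_green_cutoff[of z0 r e] unfolding smooth_fn_def by (metis iter_pd.simps(1))

lemma green_cutoff_eq_0:
  assumes "0 < e" "e \<le> r" "cmod (z - z0) \<ge> r"
  shows "green_cutoff z0 r e z = 0"
proof -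
  have r: "r > 0" using assms by simp
  have "(cmod (z - z0))\<^sup>2 \<ge> r\<^sup>2" using assms r by (simp add: power_mono)
  then have a: "(cmod (z - z0))\<^sup>2 / r\<^sup>2 \<ge> 1" using r by simp
  have "(cmod (z - z0))\<^sup>2 \<ge> e\<^sup>2" using assms by (meson order.trans power_mono less_imp_le)
  then have b: "(cmod (z - z0))\<^sup>2 / e\<^sup>2 \<ge> 1" using assms by simp
  have pz: "cmod (z - z0) > 0" using assms by linarith
  show ?thesis
    unfolding green_cutoff_def green_profile_def log_profile_eq_ln[OF a] log_profile_eq_ln[OF b] using r assms pz
    by (simp add: ln_div ln_mult power2_eq_square)
qed

lemma green_cutoff_nonneg:
  assumes "0 < e" "e \<le> r"
  shows "green_cutoff z0 r e z \<ge> 0"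
proof (cases "z = z0")
  case True
  then show ?thesis using assms by (simp add: green_cutoff_def green_profile_def)
next
  case False
  let ?t = "(cmod (z - z0))\<^sup>2"
  have t: "?t > 0" using False by simp
  have le: "?t / r\<^sup>2 \<le> ?t / e\<^sup>2" using assms t
    by (intro divide_left_mono power_mono) auto
  have "log_profile (?t / e\<^sup>2) - log_profile (?t / r\<^sup>2) \<le> ln (?t / e\<^sup>2) - ln (?t / r\<^sup>2)"
    using t assms by (intro log_profile_diff_le le) auto
  also have "\<dots> = 2 * ln (r / e)"
    using t assms by (simp add: ln_div ln_mult ln_realpow)
  finally show ?thesis unfolding green_cutoff_def green_profile_def by simp
qed

lemma green_cutoff_split: "0 < e \<Longrightarrow> 0 < e0 \<Longrightarrow> 0 < r \<Longrightarrow> green_cutoff z0 r e z = green_cutoff z0 r e0 z + green_cutoff z0 e0 e z"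
  by (simp add: green_cutoff_def green_profile_def ln_div)

lemma green_cutoff_antimono:
  assumes "0 < e" "e \<le> e0" "e0 \<le> r"
  shows "green_cutoff z0 r e0 z \<le> green_cutoff z0 r e z"
  using green_cutoff_split[of e e0 r z0 z] green_cutoff_nonneg[of e e0 z0 z] assms by auto

lemma green_cutoff_center:
  assumes "0 < e" "e \<le> r" "cmod (z - z0) \<le> e / 2"
  shows "green_cutoff z0 r e z = 2 * ln (r / e)"
proof -
  have "(cmod (z - z0))\<^sup>2 \<le> (e/2)\<^sup>2" using assms by (intro power_mono) auto
  then have a: "(cmod (z - z0))\<^sup>2 / e\<^sup>2 \<le> 1/4" using assms by (simp add: field_simps power2_eq_square)
  have "(cmod (z - z0))\<^sup>2 / r\<^sup>2 \<le> (cmod (z - z0))\<^sup>2 / e\<^sup>2"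
    using assms by (intro divide_left_mono power_mono mult_pos_pos) auto
  then have b: "(cmod (z - z0))\<^sup>2 / r\<^sup>2 \<le> 1/4" using a by linarith
  show ?thesis unfolding green_cutoff_def green_profile_def log_profile_eq_0[OF a] log_profile_eq_0[OF b] by simp
qed

lemma laplacian_green_cutoff:
  assumes "r \<noteq> 0" "e \<noteq> 0"
  shows "laplacian (green_cutoff z0 r e) z = mollifier z0 r z - mollifier z0 e z"
proof -
  define D1 where "D1 t = step_quot (t / r\<^sup>2) / r\<^sup>2 - step_quot (t / e\<^sup>2) / e\<^sup>2" for t
  define D2 where "D2 t = deriv step_quot (t / r\<^sup>2) / r\<^sup>2 / r\<^sup>2 - deriv step_quot (t / e\<^sup>2) / e\<^sup>2 / e\<^sup>2" for t
  have d1: "(green_profile r e has_real_derivative D1 x) (at x)" for x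
    unfolding green_profile_def[abs_def] D1_def
    by (rule DERIV_cong[OF DERIV_add[OF DERIV_diff[OF DERIV_chain2[OF log_profile_DERIV] DERIV_chain2[OF log_profile_DERIV]]]])
       (auto intro!: derivative_eq_intros simp: divide_inverse mult.commute)
  have d2: "(D1 has_real_derivative D2 x) (at x)" for x
    unfolding D1_def[abs_def] D2_def
    by (rule DERIV_cong[OF DERIV_diff[OF DERIV_cdivide[OF DERIV_chain2[OF smooth_real_DERIV[OF smooth_real_step_quot]]] DERIV_cdivide[OF DERIV_chain2[OF smooth_real_DERIV[OF smooth_real_step_quot]]]]])
       (auto intro!: derivative_eq_intros simp: divide_inverse mult.commute)
  have "laplacian (green_cutoff z0 r e) z = 4 * ((cmod (z - z0))\<^sup>2 * D2 ((cmod (z - z0))\<^sup>2) + D1 ((cmod (z - z0))\<^sup>2))"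
    unfolding green_cutoff_def[abs_def] by (rule laplacian_radial[OF d1 d2])
  also have "\<dots> = 4 * ((step_quot ((cmod (z - z0))\<^sup>2 / r\<^sup>2) + ((cmod (z - z0))\<^sup>2 / r\<^sup>2) * deriv step_quot ((cmod (z - z0))\<^sup>2 / r\<^sup>2)) / r\<^sup>2
       - (step_quot ((cmod (z - z0))\<^sup>2 / e\<^sup>2) + ((cmod (z - z0))\<^sup>2 / e\<^sup>2) * deriv step_quot ((cmod (z - z0))\<^sup>2 / e\<^sup>2)) / e\<^sup>2)"
    unfolding D1_def D2_def using assms by (simp add: field_simps power2_eq_square)
  also have "\<dots> = mollifier z0 r z - mollifier z0 e z"
    unfolding step_quot_identity mollifier_def using bump_mass_pos by (simp add: field_simps)
  finally show ?thesis .
qed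

lemma mollifier_nonneg: "mollifier z0 s z \<ge> 0"
  using bump_mass_pos bump_nonneg by (simp add: mollifier_def)

lemma mollifier_eq_0: "s \<noteq> 0 \<Longrightarrow> cmod (z - z0) \<ge> \<bar>s\<bar> \<Longrightarrow> mollifier z0 s z = 0"
proof -
  assume s: "s \<noteq> 0" "cmod (z - z0) \<ge> \<bar>s\<bar>"
  then have "(cmod (z - z0))\<^sup>2 \<ge> s\<^sup>2" by (metis abs_ge_zero power2_abs power_mono)
  then have "(cmod (z - z0))\<^sup>2 / s\<^sup>2 \<ge> 1" using s by simp
  then show ?thesis by (simp add: mollifier_def bump_eq_0)
qed

lemma mollifier_outside: "s > 0 \<Longrightarrow> z \<notin> cball z0 s \<Longrightarrow> mollifier z0 s z = 0"
  by (intro mollifier_eq_0) (auto simp: dist_norm norm_minus_commute)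

lemma continuous_mollifier: "s \<noteq> 0 \<Longrightarrow> continuous_on UNIV (mollifier z0 s)"
  unfolding mollifier_def using bump_mass_pos
  by (intro continuous_intros continuous_on_compose2[OF continuous_bump]) auto

lemma green_cutoff_support: "0 < e \<Longrightarrow> e \<le> r \<Longrightarrow> closure {z. green_cutoff z0 r e z \<noteq> 0} \<subseteq> cball z0 r"
proof -
  assume a: "0 < e" "e \<le> r"
  have "{z. green_cutoff z0 r e z \<noteq> 0} \<subseteq> cball z0 r"
    using green_cutoff_eq_0[OF a] by (force simp: dist_norm norm_minus_commute)
  then show ?thesis by (simp add: closure_minimal)
qed

lemma test_fn_green_cutoff:
  assumes "0 < e" "e \<le> r" "cball z0 r \<subseteq> V"
  shows "test_fn V (green_cutoff z0 r e)"
proof -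
  have s: "closure {z. green_cutoff z0 r e z \<noteq> 0} \<subseteq> cball z0 r" by (rule green_cutoff_support[OF assms(1,2)])
  have "{z. green_cutoff z0 r e z \<noteq> 0} \<subseteq> cball z0 r" using closure_subset s by (rule subset_trans)
  then have "bounded {z. green_cutoff z0 r e z \<noteq> 0}" by (rule bounded_subset[OF bounded_cball])
  then have "compact (closure {z. green_cutoff z0 r e z \<noteq> 0})" by (simp add: compact_closure)
  moreover have "closure {z. green_cutoff z0 r e z \<noteq> 0} \<subseteq> V" using s assms(3) by (rule subset_trans)
  ultimately show ?thesis unfolding test_fn_def using smooth_fn_green_cutoff by blast
qed

lemma green_cutoff_outside: "0 < e \<Longrightarrow> e \<le> r \<Longrightarrow> z \<notin> cball z0 r \<Longrightarrow> green_cutoff z0 r e z = 0"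
  by (intro green_cutoff_eq_0) (auto simp: dist_norm norm_minus_commute)

lemma continuous_laplacian_green_cutoff: "0 < e \<Longrightarrow> e \<le> r \<Longrightarrow> continuous_on UNIV (laplacian (green_cutoff q r e))"
proof -
  assume a: "0 < e" "e \<le> r"
  have "laplacian (green_cutoff q r e) = (\<lambda>z. mollifier q r z - mollifier q e z)" using a by (intro ext laplacian_green_cutoff) auto
  then show ?thesis using a by (auto intro!: continuous_intros continuous_mollifier)
qed

lemma laplacian_green_cutoff_outside: "0 < e \<Longrightarrow> e \<le> r \<Longrightarrow> z \<notin> cball q r \<Longrightarrow> laplacian (green_cutoff q r e) z = 0"
proof -
  assume a: "0 < e" "e \<le> r" "z \<notin> cball q r"
  then have "z \<notin> cball q e" by auto
  then show ?thesis using a by (simp add: laplacian_green_cutoff mollifier_outside)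
qed

lemma lborel_integral_affine:
  fixes f :: "'a::euclidean_space \<Rightarrow> real"
  assumes f[measurable]: "f \<in> borel_measurable borel" and c: "c \<noteq> 0"
  shows "(\<integral>x. f x \<partial>lborel) = \<bar>c\<bar> ^ DIM('a) * (\<integral>x. f (t + c *\<^sub>R x) \<partial>lborel)"
proof -
  have "(\<integral>x. f x \<partial>lborel) = (\<integral>x. f x \<partial>density (distr lborel borel (\<lambda>x. t + c *\<^sub>R x)) (\<lambda>_. \<bar>c\<bar> ^ DIM('a)))"
    by (rule arg_cong[where f="\<lambda>M. integral\<^sup>L M f"]) (rule lborel_affine[OF c])
  also have "\<dots> = (\<integral>x. \<bar>c\<bar> ^ DIM('a) *\<^sub>R f x \<partial>distr lborel borel (\<lambda>x. t + c *\<^sub>R x))"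
    by (rule integral_density) auto
  also have "\<dots> = (\<integral>x. \<bar>c\<bar> ^ DIM('a) *\<^sub>R f (t + c *\<^sub>R x) \<partial>lborel)"
    by (rule integral_distr) auto
  also have "\<dots> = \<bar>c\<bar> ^ DIM('a) * (\<integral>x. f (t + c *\<^sub>R x) \<partial>lborel)"
    by simp
  finally show ?thesis .
qed

lemma emeasure_lborel_open_pos:
  fixes U :: "'a::euclidean_space set"
  assumes "open U" "U \<noteq> {}"
  shows "emeasure lborel U > 0"
proof -
  obtain x where x: "x \<in> U" using assms by blast
  obtain a b where ab: "box a b \<subseteq> U" "x \<in> box a b" "\<forall>i\<in>Basis. a \<bullet> i < b \<bullet> i"
    using open_contains_box[OF assms(1) x] by blast
  have "0 < emeasure lborel (box a b)"
    using ab unfolding emeasure_lborel_box_eq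
    by (force intro!: prod_pos simp: mem_box algebra_simps)
  also have "\<dots> \<le> emeasure lborel U"
    using ab assms by (intro emeasure_mono) auto
  finally show ?thesis .
qed

lemma integral_pos_on_open:
  fixes g :: "'a::euclidean_space \<Rightarrow> real"
  assumes int: "integrable lborel g" and nn: "\<And>x. g x \<ge> 0"
    and U: "open U" "U \<noteq> {}" and pos: "\<And>x. x \<in> U \<Longrightarrow> g x > 0"
  shows "(\<integral>x. g x \<partial>lborel) > 0"
proof -
  have "(\<integral>x. g x \<partial>lborel) \<ge> 0" using nn by simp
  moreover have "(\<integral>x. g x \<partial>lborel) \<noteq> 0"
  proof
    assume "(\<integral>x. g x \<partial>lborel) = 0"
    then have "AE x in lborel. g x = 0"
      using integral_nonneg_eq_0_iff_AE[OF int] nn by auto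
    then have "AE x in lborel. x \<notin> U"
      by eventually_elim (use pos in force)
    then have "emeasure lborel U = 0"
      using AE_iff_measurable[of U lborel "\<lambda>x. x \<notin> U"] U by auto
    then show False using emeasure_lborel_open_pos[OF U] by simp
  qed
  ultimately show ?thesis by simp
qed

lemma continuous_on_cball_bounded:
  fixes f :: "complex \<Rightarrow> real"
  assumes "continuous_on (cball a r) f"
  obtains K where "K > 0" "\<And>z. z \<in> cball a r \<Longrightarrow> \<bar>f z\<bar> \<le> K"
proof -
  have "compact (f ` cball a r)" by (rule compact_continuous_image[OF assms compact_cball])
  then have "bounded (f ` cball a r)" by (rule compact_imp_bounded)
  then obtain K where "K > 0" "\<forall>x\<in>f ` cball a r. norm x \<le> K" unfolding bounded_pos by blast
  then show ?thesis using that by auto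
qed

lemma integrable_vanishing_outside_cball:
  fixes g :: "complex \<Rightarrow> real"
  assumes "continuous_on (cball a s) g" "\<And>z. z \<notin> cball a s \<Longrightarrow> g z = 0"
  shows "integrable lborel g"
proof -
  have "integrable lborel (\<lambda>x. indicator (cball a s) x *\<^sub>R g x)"
    by (rule borel_integrable_compact) (use assms in auto)
  then show ?thesis
    by (rule Bochner_Integration.integrable_cong[THEN iffD1, rotated -1]) (auto simp: indicator_def assms(2))
qed

lemma borel_measurable_vanishing_outside_cball:
  fixes g :: "complex \<Rightarrow> real"
  assumes "continuous_on (cball a s) g" "\<And>z. z \<notin> cball a s \<Longrightarrow> g z = 0"
  shows "g \<in> borel_measurable borel"
proof -
  have "(\<lambda>x. indicator (cball a s) x *\<^sub>R g x) \<in> borel_measurable borel"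
    by (rule borel_measurable_continuous_on_indicator) (use assms in auto)
  moreover have "(\<lambda>x. indicator (cball a s) x *\<^sub>R g x) = g"
  proof
    fix x show "indicator (cball a s) x *\<^sub>R g x = g x"
      using assms(2)[of x] by (cases "x \<in> cball a s") auto
  qed
  ultimately show ?thesis by simp
qed

lemma integral_mult_mollifier_rescale:
  assumes s: "s > 0" and hc: "continuous_on (cball a s) h"
  shows "(\<integral>z. h z * mollifier a s z \<partial>lborel) = (\<integral>y. h (a + s *\<^sub>R y) * mollifier 0 1 y \<partial>lborel)"
proof -
  have m: "(\<lambda>z. h z * mollifier a s z) \<in> borel_measurable borel"
    by (rule borel_measurable_vanishing_outside_cball[of a s]) (use hc s mollifier_outside in \<open>auto intro!: continuous_intros continuous_on_subset[OF continuous_mollifier]\<close>)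
  have "(\<integral>z. h z * mollifier a s z \<partial>lborel) = \<bar>s\<bar> ^ DIM(complex) * (\<integral>y. h (a + s *\<^sub>R y) * mollifier a s (a + s *\<^sub>R y) \<partial>lborel)"
    using s by (intro lborel_integral_affine[OF m]) auto
  also have "\<dots> = (\<integral>y. h (a + s *\<^sub>R y) * mollifier 0 1 y \<partial>lborel)"
  proof -
    have "(\<lambda>y. h (a + s *\<^sub>R y) * mollifier a s (a + s *\<^sub>R y)) = (\<lambda>y. (h (a + s *\<^sub>R y) * mollifier 0 1 y) / s\<^sup>2)"
      using s by (auto simp: mollifier_def norm_scaleR power_mult_distrib field_simps)
    then show ?thesis using s by simp
  qed
  finally show ?thesis .
qed

definition mollifier_mass :: real where "mollifier_mass = (\<integral>z. mollifier 0 1 z \<partial>lborel)"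

lemma mollifier_mass_nonneg: "mollifier_mass \<ge> 0"
  unfolding mollifier_mass_def by (intro integral_nonneg_AE) (simp add: mollifier_nonneg)

lemma integral_mollifier: "s > 0 \<Longrightarrow> (\<integral>z. mollifier z0 s z \<partial>lborel) = mollifier_mass"
  using integral_mult_mollifier_rescale[of s z0 "\<lambda>_. 1"] by (simp add: mollifier_mass_def)

lemma integrable_mult_mollifier:
  assumes "continuous_on (cball z0 s) w" "s > 0"
  shows "integrable lborel (\<lambda>z. w z * mollifier z0 s z)"
  by (rule integrable_vanishing_outside_cball[of z0 s]) (use assms mollifier_outside in \<open>auto intro!: continuous_intros continuous_on_subset[OF continuous_mollifier]\<close>)

lemma integrable_mollifier: "s > 0 \<Longrightarrow> integrable lborel (mollifier z0 s)"
  using integrable_mult_mollifier[of z0 s "\<lambda>_. 1"] by simp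

lemma integrable_mult_green_cutoff:
  assumes "continuous_on (cball z0 r) F" "0 < e" "e \<le> r"
  shows "integrable lborel (\<lambda>z. F z * green_cutoff z0 r e z)"
  by (rule integrable_vanishing_outside_cball[of z0 r]) (use assms green_cutoff_outside in \<open>auto intro!: continuous_intros continuous_on_subset[OF continuous_green_cutoff]\<close>)

lemma integrable_mult_laplacian_green_cutoff:
  assumes "continuous_on (cball q r) w" "0 < e" "e \<le> r"
  shows "integrable lborel (\<lambda>z. w z * laplacian (green_cutoff q r e) z)"
  by (rule integrable_vanishing_outside_cball[of q r]) (use assms laplacian_green_cutoff_outside in \<open>auto intro!: continuous_intros continuous_on_subset[OF continuous_laplacian_green_cutoff]\<close>)

lemma integral_mult_mollifier_le:
  assumes "continuous_on (cball z0 s) w" "s > 0" "\<And>z. z \<in> cball z0 s \<Longrightarrow> w z \<le> M"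
  shows "(\<integral>z. w z * mollifier z0 s z \<partial>lborel) \<le> M * mollifier_mass"
proof -
  have "(\<integral>z. w z * mollifier z0 s z \<partial>lborel) \<le> (\<integral>z. M * mollifier z0 s z \<partial>lborel)"
  proof (rule integral_mono[OF integrable_mult_mollifier[OF assms(1,2)]])
    show "integrable lborel (\<lambda>z. M * mollifier z0 s z)" using integrable_mollifier[OF assms(2)] by simp
    fix z show "w z * mollifier z0 s z \<le> M * mollifier z0 s z"
      using assms(3)[of z] mollifier_outside[OF assms(2), of z] mollifier_nonneg[of z0 s z]
      by (cases "z \<in> cball z0 s") (auto intro: mult_right_mono)
  qed
  also have "\<dots> = M * mollifier_mass" using integral_mollifier[OF assms(2)] by simp
  finally show ?thesis .
qed

lemma integral_mult_mollifier_ge: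
  assumes "continuous_on (cball z0 s) w" "s > 0" "\<And>z. z \<in> cball z0 s \<Longrightarrow> w z \<ge> M"
  shows "(\<integral>z. w z * mollifier z0 s z \<partial>lborel) \<ge> M * mollifier_mass"
proof -
  have "(\<integral>z. w z * mollifier z0 s z \<partial>lborel) \<ge> (\<integral>z. M * mollifier z0 s z \<partial>lborel)"
  proof (rule integral_mono[OF _ integrable_mult_mollifier[OF assms(1,2)]])
    show "integrable lborel (\<lambda>z. M * mollifier z0 s z)" using integrable_mollifier[OF assms(2)] by simp
    fix z show "M * mollifier z0 s z \<le> w z * mollifier z0 s z"
      using assms(3)[of z] mollifier_outside[OF assms(2), of z] mollifier_nonneg[of z0 s z]
      by (cases "z \<in> cball z0 s") (auto intro: mult_right_mono)
  qed
  also have "(\<integral>z. M * mollifier z0 s z \<partial>lborel) = M * mollifier_mass" using integral_mollifier[OF assms(2)] by simp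
  finally show ?thesis .
qed

lemma integral_mult_laplacian_green_cutoff:
  assumes "continuous_on (cball z0 r) w" "0 < e" "e \<le> r"
  shows "(\<integral>z. w z * laplacian (green_cutoff z0 r e) z \<partial>lborel) =
         (\<integral>z. w z * mollifier z0 r z \<partial>lborel) - (\<integral>z. w z * mollifier z0 e z \<partial>lborel)"
proof -
  have r: "r > 0" using assms by simp
  have we: "continuous_on (cball z0 e) w" using assms by (auto intro: continuous_on_subset)
  have "(\<lambda>z. w z * laplacian (green_cutoff z0 r e) z) = (\<lambda>z. w z * mollifier z0 r z - w z * mollifier z0 e z)"
    using assms r by (auto simp: laplacian_green_cutoff algebra_simps)
  then show ?thesis
    using integrable_mult_mollifier[OF assms(1) r] integrable_mult_mollifier[OF we assms(2)] by simp
qed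

lemma integral_mult_mollifier_near:
  fixes h :: "complex \<Rightarrow> real"
  assumes hc: "continuous_on (cball q r) h" and r: "r > 0" and eta: "eta > 0"
  obtains d where "d > 0" "d \<le> r"
    "\<And>e. 0 < e \<Longrightarrow> e \<le> d \<Longrightarrow> (h q - eta) * mollifier_mass \<le> (\<integral>z. h z * mollifier q e z \<partial>lborel)"
    "\<And>e. 0 < e \<Longrightarrow> e \<le> d \<Longrightarrow> (\<integral>z. h z * mollifier q e z \<partial>lborel) \<le> (h q + eta) * mollifier_mass"
proof -
  have "q \<in> cball q r" using r by simp
  then obtain d where d: "d > 0" "\<And>z. z \<in> cball q r \<Longrightarrow> dist z q < d \<Longrightarrow> dist (h z) (h q) < eta"
    using hc eta unfolding continuous_on_iff by metis
  define d' where "d' = min r (d / 2)"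
  have d': "d' > 0" "d' \<le> r" using r d by (auto simp: d'_def)
  have near: "\<bar>h z - h q\<bar> < eta" if "z \<in> cball q e" "e \<le> d'" for z e
  proof -
    have "z \<in> cball q r" "dist z q < d" using that d(1) by (auto simp: d'_def dist_commute)
    from d(2)[OF this] show ?thesis by (simp add: dist_real_def)
  qed
  have hce: "continuous_on (cball q e) h" if "e \<le> d'" for e
    using hc that d' by (auto intro: continuous_on_subset)
  show ?thesis
  proof (rule that[OF d'])
    fix e assume e: "0 < e" "e \<le> d'"
    show "(h q - eta) * mollifier_mass \<le> (\<integral>z. h z * mollifier q e z \<partial>lborel)"
      by (rule integral_mult_mollifier_ge[OF hce[OF e(2)] e(1)]) (use near e(2) in force)
    show "(\<integral>z. h z * mollifier q e z \<partial>lborel) \<le> (h q + eta) * mollifier_mass"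
      by (rule integral_mult_mollifier_le[OF hce[OF e(2)] e(1)]) (use near e(2) in force)
  qed
qed

lemma integral_mult_green_cutoff_pos:
  assumes e: "0 < e" "e < r"
    and Fc: "continuous_on (cball z0 r) F" and Fpos: "\<And>z. z \<in> cball z0 r \<Longrightarrow> F z > 0"
  shows "(\<integral>z. F z * green_cutoff z0 r e z \<partial>lborel) > 0"
proof (rule integral_pos_on_open[OF integrable_mult_green_cutoff[OF Fc e(1) less_imp_le[OF e(2)]]])
  fix z show "F z * green_cutoff z0 r e z \<ge> 0"
    using Fpos[of z] green_cutoff_outside[of e r z z0] green_cutoff_nonneg[of e r z0 z] e
    by (cases "z \<in> cball z0 r") auto
next
  show "open (ball z0 (e/2))" "ball z0 (e/2) \<noteq> {}" using e by auto
next
  fix z assume z: "z \<in> ball z0 (e/2)"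
  then have "green_cutoff z0 r e z = 2 * ln (r / e)"
    using e by (intro green_cutoff_center) (auto simp: dist_norm norm_minus_commute)
  moreover have "ln (r / e) > 0" using e by simp
  moreover have "z \<in> cball z0 r" using z e by auto
  ultimately show "F z * green_cutoff z0 r e z > 0" using Fpos by simp
qed

lemma integral_mult_green_cutoff_antimono:
  assumes e: "0 < e" "e \<le> e0" "e0 \<le> r"
    and Fc: "continuous_on (cball z0 r) F" and Fnn: "\<And>z. z \<in> cball z0 r \<Longrightarrow> F z \<ge> 0"
  shows "(\<integral>z. F z * green_cutoff z0 r e0 z \<partial>lborel) \<le> (\<integral>z. F z * green_cutoff z0 r e z \<partial>lborel)"
proof (rule integral_mono)
  show "integrable lborel (\<lambda>z. F z * green_cutoff z0 r e0 z)" "integrable lborel (\<lambda>z. F z * green_cutoff z0 r e z)"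
    using e by (auto intro!: integrable_mult_green_cutoff[OF Fc])
  fix z show "F z * green_cutoff z0 r e0 z \<le> F z * green_cutoff z0 r e z"
    using e Fnn[of z] green_cutoff_antimono[OF e] green_cutoff_outside[of e r z z0] green_cutoff_outside[of e0 r z z0]
    by (cases "z \<in> cball z0 r") (auto intro: mult_left_mono)
qed

lemma integral_mult_green_cutoff_mono:
  assumes e: "0 < e" "e \<le> r"
    and Fc: "continuous_on (cball q r) F" and Gc: "continuous_on (cball q r) G"
    and le: "\<And>z. z \<in> cball q r \<Longrightarrow> F z \<le> G z"
  shows "(\<integral>z. F z * green_cutoff q r e z \<partial>lborel) \<le> (\<integral>z. G z * green_cutoff q r e z \<partial>lborel)"
proof (rule integral_mono[OF integrable_mult_green_cutoff[OF Fc e] integrable_mult_green_cutoff[OF Gc e]])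
  fix z show "F z * green_cutoff q r e z \<le> G z * green_cutoff q r e z"
    using le[of z] green_cutoff_nonneg[OF e, of q z] green_cutoff_outside[OF e, of z q]
    by (cases "z \<in> cball q r") (auto intro: mult_right_mono)
qed

lemma weak_ineq_diff:
  assumes um: "continuous_on (cball q r) um" and up: "continuous_on (cball q r) up"
    and fm: "continuous_on (cball q r) fm" and fp: "continuous_on (cball q r) fp"
    and e: "0 < e" "e \<le> r"
    and i1: "(\<integral>z. um z * laplacian (green_cutoff q r e) z \<partial>lborel) \<ge> (\<integral>z. fm z * green_cutoff q r e z \<partial>lborel)"
    and i2: "(\<integral>z. up z * laplacian (green_cutoff q r e) z \<partial>lborel) \<le> (\<integral>z. fp z * green_cutoff q r e z \<partial>lborel)"
  shows "(\<integral>z. (um z - up z) * laplacian (green_cutoff q r e) z \<partial>lborel) \<ge> (\<integral>z. (fm z - fp z) * green_cutoff q r e z \<partial>lborel)"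
proof -
  have "(\<integral>z. (um z - up z) * laplacian (green_cutoff q r e) z \<partial>lborel) =
      (\<integral>z. um z * laplacian (green_cutoff q r e) z \<partial>lborel) - (\<integral>z. up z * laplacian (green_cutoff q r e) z \<partial>lborel)"
    using integrable_mult_laplacian_green_cutoff[OF um e] integrable_mult_laplacian_green_cutoff[OF up e] by (simp add: left_diff_distrib)
  moreover have "(\<integral>z. (fm z - fp z) * green_cutoff q r e z \<partial>lborel) =
      (\<integral>z. fm z * green_cutoff q r e z \<partial>lborel) - (\<integral>z. fp z * green_cutoff q r e z \<partial>lborel)"
    using integrable_mult_green_cutoff[OF fm e] integrable_mult_green_cutoff[OF fp e] by (simp add: left_diff_distrib)
  ultimately show ?thesis using i1 i2 by linarith
qed

lemma weak_ineq_linearized: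
  assumes e: "0 < e" "e \<le> r"
    and Fc: "continuous_on (cball q r) F" and hc: "continuous_on (cball q r) h"
    and lin: "\<And>z. z \<in> cball q r \<Longrightarrow> - F z \<le> K * h z"
    and weak: "(\<integral>z. F z * green_cutoff q r e z \<partial>lborel) \<le> (\<integral>z. - h z * laplacian (green_cutoff q r e) z \<partial>lborel)"
  shows "(\<integral>z. h z * laplacian (green_cutoff q r e) z \<partial>lborel) \<le> K * (\<integral>z. h z * green_cutoff q r e z \<partial>lborel)"
proof -
  have "(\<integral>z. h z * laplacian (green_cutoff q r e) z \<partial>lborel) \<le> (\<integral>z. - F z * green_cutoff q r e z \<partial>lborel)"
    using weak by simp
  also have "\<dots> \<le> (\<integral>z. K * h z * green_cutoff q r e z \<partial>lborel)"
    using Fc hc lin by (intro integral_mult_green_cutoff_mono[OF e] continuous_intros)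
  also have "\<dots> = K * (\<integral>z. h z * green_cutoff q r e z \<partial>lborel)" by (simp add: mult.assoc)
  finally show ?thesis .
qed

section \<open>Weak maximum principle\<close>

text \<open>Testing \<open>\<Delta>w \<ge> F\<close> against \<open>green_cutoff z0 r e\<close> compares the mollified means of \<open>w\<close> at the
  scales \<open>r\<close> and \<open>e\<close>. At a maximum of \<open>w\<close> their difference is at most \<open>o(1)\<close> as \<open>e \<rightarrow> 0\<close>, whereas
  \<open>F > 0\<close> near \<open>z0\<close> bounds \<open>\<integral> F * green_cutoff z0 r e\<close> below uniformly in \<open>e\<close>.\<close>
lemma weak_laplacian_pos_no_local_max:
  fixes w F :: "complex \<Rightarrow> real"
  assumes rho: "rho > 0"
    and wc: "continuous_on (cball z0 rho) w"
    and wmax: "\<And>z. z \<in> cball z0 rho \<Longrightarrow> w z \<le> w z0"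
    and Fc: "continuous_on (cball z0 rho) F" and F0: "F z0 > 0"
    and weak: "\<And>r e. 0 < e \<Longrightarrow> e \<le> r \<Longrightarrow> r < rho \<Longrightarrow>
        (\<integral>z. w z * laplacian (green_cutoff z0 r e) z \<partial>lborel) \<ge> (\<integral>z. F z * green_cutoff z0 r e z \<partial>lborel)"
  shows False
proof -
  have z0in: "z0 \<in> cball z0 rho" using rho by simp
  obtain d where d: "d > 0" "\<And>z. z \<in> cball z0 rho \<Longrightarrow> dist z z0 < d \<Longrightarrow> dist (F z) (F z0) < F z0 / 2"
    using Fc z0in F0 unfolding continuous_on_iff by (metis half_gt_zero)
  define r where "r = min (rho / 2) (d / 2)"
  have r: "r > 0" "r < rho" "r < d" using rho d by (auto simp: r_def)
  have Fpos: "F z > 0" if "z \<in> cball z0 r" for z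
  proof -
    have "z \<in> cball z0 rho" "dist z z0 < d" using that r by (auto simp: dist_commute)
    from d(2)[OF this] have "\<bar>F z - F z0\<bar> < F z0 / 2" by (simp add: dist_real_def)
    then show ?thesis by arith
  qed
  have Fcr: "continuous_on (cball z0 r) F" and wcr: "continuous_on (cball z0 r) w"
    using Fc wc r by (auto intro: continuous_on_subset)
  define c where "c = (\<integral>z. F z * green_cutoff z0 r (r/2) z \<partial>lborel)"
  have c: "c > 0" unfolding c_def using r by (intro integral_mult_green_cutoff_pos[OF _ _ Fcr Fpos]) auto
  define eta where "eta = c / (2 * (mollifier_mass + 1))"
  have eta: "eta > 0" "eta * mollifier_mass < c"
  proof -
    show "eta > 0" using c mollifier_mass_nonneg by (simp add: eta_def)
    have "eta * mollifier_mass = c * (mollifier_mass / (2 * (mollifier_mass + 1)))" by (simp add: eta_def)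
    also have "\<dots> < c * 1" using c mollifier_mass_nonneg by (intro mult_strict_left_mono) auto
    finally show "eta * mollifier_mass < c" by simp
  qed
  obtain e0 where e0: "e0 > 0" "e0 \<le> r"
    and wnear: "\<And>e. 0 < e \<Longrightarrow> e \<le> e0 \<Longrightarrow> (w z0 - eta) * mollifier_mass \<le> (\<integral>z. w z * mollifier z0 e z \<partial>lborel)"
    by (rule integral_mult_mollifier_near[OF wcr r(1) eta(1)]) (rule that)
  define e where "e = min (r/2) e0"
  have e: "0 < e" "e \<le> r/2" "e \<le> r" "e \<le> e0" using r e0 by (auto simp: e_def)
  have "c \<le> (\<integral>z. F z * green_cutoff z0 r e z \<partial>lborel)"
    unfolding c_def using e r Fpos by (intro integral_mult_green_cutoff_antimono[OF _ _ _ Fcr]) (auto intro: less_imp_le)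
  also have "\<dots> \<le> (\<integral>z. w z * laplacian (green_cutoff z0 r e) z \<partial>lborel)" by (rule weak[OF e(1,3) r(2)])
  also have "\<dots> = (\<integral>z. w z * mollifier z0 r z \<partial>lborel) - (\<integral>z. w z * mollifier z0 e z \<partial>lborel)"
    by (rule integral_mult_laplacian_green_cutoff[OF wcr e(1,3)])
  also have "\<dots> \<le> w z0 * mollifier_mass - (w z0 - eta) * mollifier_mass"
  proof (rule diff_mono)
    show "(\<integral>z. w z * mollifier z0 r z \<partial>lborel) \<le> w z0 * mollifier_mass"
      by (rule integral_mult_mollifier_le[OF wcr r(1)]) (use wmax r in auto)
    show "(w z0 - eta) * mollifier_mass \<le> (\<integral>z. w z * mollifier z0 e z \<partial>lborel)"
      by (rule wnear[OF e(1,4)])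
  qed
  also have "\<dots> = eta * mollifier_mass" by (simp add: algebra_simps)
  finally show False using eta by simp
qed

section \<open>Integration by parts\<close>

lemma directional_deriv_eq_0_outside:
  fixes g g1 :: "complex \<Rightarrow> real"
  assumes e: "cmod e = 1"
    and gd: "\<And>z. ((\<lambda>t. g (z + of_real t * e)) has_real_derivative g1 z) (at 0)"
    and gs: "\<And>z. z \<notin> cball a R \<Longrightarrow> g z = 0"
    and z: "z \<notin> cball a R"
  shows "g1 z = 0"
proof -
  define d where "d = dist a z - R"
  have d: "d > 0" using z by (simp add: d_def)
  have "((\<lambda>t. g (z + of_real t * e)) has_real_derivative 0) (at 0)"
  proof (rule has_field_derivative_transform_within_open[of "\<lambda>_. 0" 0 0 "ball 0 d"])
    show "((\<lambda>_. 0) has_real_derivative 0) (at 0)" by simp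
    show "open (ball (0::real) d)" "(0::real) \<in> ball 0 d" using d by auto
    fix t :: real assume t: "t \<in> ball 0 d"
    have "dist a (z + of_real t * e) \<ge> dist a z - \<bar>t\<bar>"
      using dist_triangle[of a z "z + of_real t * e"] e by (simp add: dist_norm norm_mult)
    then have "z + of_real t * e \<notin> cball a R" using t by (auto simp: d_def)
    then show "0 = g (z + of_real t * e)" using gs by simp
  qed
  then show ?thesis using gd[of z] DERIV_unique by blast
qed

lemma directional_DERIV_shift:
  assumes "\<And>z. ((\<lambda>t. g (z + of_real t * e)) has_real_derivative g1 z) (at 0)"
  shows "((\<lambda>t. g (z + of_real t * e)) has_real_derivative g1 (z + of_real s * e)) (at s)"
proof -
  have "((\<lambda>t. g ((z + of_real s * e) + of_real t * e)) has_real_derivative g1 (z + of_real s * e)) (at 0)"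
    by (rule assms)
  then have "((\<lambda>t. g (z + of_real (t + s) * e)) has_real_derivative g1 (z + of_real s * e)) (at 0)"
    by (simp add: algebra_simps)
  then show ?thesis using DERIV_shift[of "\<lambda>t. g (z + of_real t * e)" _ 0 s] by simp
qed

lemma difference_quotient_bound:
  fixes f f1 :: "complex \<Rightarrow> real"
  assumes fd: "\<And>z. ((\<lambda>t. f (z + of_real t * e)) has_real_derivative f1 z) (at 0)"
    and bound: "\<And>t. \<bar>t\<bar> \<le> \<bar>c\<bar> \<Longrightarrow> \<bar>f1 (z + of_real t * e)\<bar> \<le> K"
  shows "\<bar>(f (z + of_real c * e) - f z) / c\<bar> \<le> K"
proof -
  have d: "((\<lambda>t. f (z + of_real t * e)) has_real_derivative f1 (z + of_real t * e)) (at t)" for t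
    by (rule directional_DERIV_shift[OF fd])
  consider "c > 0" | "c < 0" | "c = 0" by linarith
  then show ?thesis
  proof cases
    case 1
    from MVT2[OF 1 d] obtain xi where "0 < xi" "xi < c"
      and "f (z + of_real c * e) - f (z + of_real 0 * e) = (c - 0) * f1 (z + of_real xi * e)"
      by blast
    then have "(f (z + of_real c * e) - f z) / c = f1 (z + of_real xi * e)" using 1 by simp
    then show ?thesis using bound[of xi] \<open>0 < xi\<close> \<open>xi < c\<close> by simp
  next
    case 2
    from MVT2[OF 2 d] obtain xi where "c < xi" "xi < 0"
      and "f (z + of_real 0 * e) - f (z + of_real c * e) = (0 - c) * f1 (z + of_real xi * e)"
      by blast
    then have "(f (z + of_real c * e) - f z) / c = f1 (z + of_real xi * e)" using 2 by (simp add: field_simps)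
    then show ?thesis using bound[of xi] \<open>c < xi\<close> \<open>xi < 0\<close> by simp
  next
    case 3
    then show ?thesis using bound[of 0] by simp
  qed
qed

lemma integral_difference_quotient_tendsto:
  fixes f f1 w :: "complex \<Rightarrow> real"
  assumes e: "cmod e = 1"
    and fc: "continuous_on UNIV f" and f1c: "continuous_on UNIV f1"
    and fd: "\<And>z. ((\<lambda>t. f (z + of_real t * e)) has_real_derivative f1 z) (at 0)"
    and wc: "continuous_on UNIV w"
    and ws: "\<And>z t. z \<notin> cball a R \<Longrightarrow> \<bar>t\<bar> \<le> 1 \<Longrightarrow> w z * (f (z + of_real t * e) - f z) = 0"
    and h: "filterlim h (at 0) sequentially" and h1: "\<And>n. \<bar>h n\<bar> \<le> 1"
  shows "(\<lambda>n. \<integral>z. w z * ((f (z + of_real (h n) * e) - f z) / h n) \<partial>lborel) \<longlonglongrightarrow> (\<integral>z. w z * f1 z \<partial>lborel)"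
proof -
  obtain K where K: "K > 0" "\<And>z. z \<in> cball a (R + 1) \<Longrightarrow> \<bar>f1 z\<bar> \<le> K"
    using continuous_on_cball_bounded[OF continuous_on_subset[OF f1c]] by blast
  have meas: "f \<in> borel_measurable lborel" if "continuous_on UNIV f" for f :: "complex \<Rightarrow> real"
    using borel_measurable_continuous_onI[OF that] by simp
  have fsh: "continuous_on UNIV (\<lambda>z. f (z + of_real c * e))" for c
    by (rule continuous_on_compose2[OF fc]) (auto intro!: continuous_intros)
  show ?thesis
  proof (rule integral_dominated_convergence[where w="\<lambda>z. indicator (cball a R) z *\<^sub>R (\<bar>w z\<bar> * K)"])
    show "(\<lambda>z. w z * f1 z) \<in> borel_measurable lborel" by (intro meas continuous_intros wc f1c)
    show "(\<lambda>z. w z * ((f (z + of_real (h n) * e) - f z) / h n)) \<in> borel_measurable lborel" for n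
      unfolding divide_inverse by (intro meas continuous_intros wc fc fsh)
    show "integrable lborel (\<lambda>z. indicator (cball a R) z *\<^sub>R (\<bar>w z\<bar> * K))"
      by (intro borel_integrable_compact compact_cball continuous_intros continuous_on_subset[OF wc]) auto
    show "AE z in lborel. (\<lambda>n. w z * ((f (z + of_real (h n) * e) - f z) / h n)) \<longlonglongrightarrow> w z * f1 z"
    proof (rule AE_I2)
      fix z
      have "((\<lambda>t. (f (z + of_real (0 + t) * e) - f (z + of_real 0 * e)) / t) \<longlongrightarrow> f1 z) (at 0)"
        using fd[of z] unfolding DERIV_def .
      then have "((\<lambda>t. (f (z + of_real t * e) - f z) / t) \<longlongrightarrow> f1 z) (at 0)" by simp
      from filterlim_compose[OF this h]
      show "(\<lambda>n. w z * ((f (z + of_real (h n) * e) - f z) / h n)) \<longlonglongrightarrow> w z * f1 z"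
        by (intro tendsto_mult tendsto_const) (simp add: o_def)
    qed
    show "AE z in lborel. norm (w z * ((f (z + of_real (h n) * e) - f z) / h n))
        \<le> indicator (cball a R) z *\<^sub>R (\<bar>w z\<bar> * K)" for n
    proof (rule AE_I2)
      fix z
      show "norm (w z * ((f (z + of_real (h n) * e) - f z) / h n)) \<le> indicator (cball a R) z *\<^sub>R (\<bar>w z\<bar> * K)"
      proof (cases "z \<in> cball a R")
        case True
        have "\<bar>(f (z + of_real (h n) * e) - f z) / h n\<bar> \<le> K"
        proof (rule difference_quotient_bound[OF fd])
          fix t :: real assume "\<bar>t\<bar> \<le> \<bar>h n\<bar>"
          then have "dist a (z + of_real t * e) \<le> R + 1"
            using dist_triangle[of a "z + of_real t * e" z] e True h1[of n] by (simp add: dist_norm norm_mult)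
          then show "\<bar>f1 (z + of_real t * e)\<bar> \<le> K" using K(2) by simp
        qed
        then have "\<bar>w z\<bar> * \<bar>(f (z + of_real (h n) * e) - f z) / h n\<bar> \<le> \<bar>w z\<bar> * K"
          by (rule mult_left_mono) simp
        then show ?thesis using True by (simp only: real_norm_def abs_mult indicator_simps scaleR_one)
      next
        case False
        then have "w z * (f (z + of_real (h n) * e) - f z) = 0" using ws h1 by blast
        then have "w z * ((f (z + of_real (h n) * e) - f z) / h n) = 0" by simp
        then show ?thesis using False by simp
      qed
    qed
  qed
qed

lemma integration_by_parts_directional:
  fixes b b1 g g1 :: "complex \<Rightarrow> real"
  assumes e: "cmod e = 1"
    and bc: "continuous_on UNIV b" and b1c: "continuous_on UNIV b1"
    and bd: "\<And>z. ((\<lambda>t. b (z + of_real t * e)) has_real_derivative b1 z) (at 0)"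
    and gc: "continuous_on UNIV g" and g1c: "continuous_on UNIV g1"
    and gd: "\<And>z. ((\<lambda>t. g (z + of_real t * e)) has_real_derivative g1 z) (at 0)"
    and gs: "\<And>z. z \<notin> cball a R \<Longrightarrow> g z = 0"
  shows "(\<integral>z. b z * g1 z \<partial>lborel) = - (\<integral>z. b1 z * g z \<partial>lborel)"
proof -
  define h where "h n = 1 / real (Suc n)" for n
  have hlim: "h \<longlonglongrightarrow> 0" unfolding h_def by (rule LIMSEQ_Suc[OF lim_const_over_n])
  have h: "filterlim h (at 0) sequentially" "filterlim (\<lambda>n. - h n) (at 0) sequentially"
    using hlim tendsto_minus[OF hlim] by (auto simp: filterlim_at intro!: always_eventually) (simp_all add: h_def)
  have h1: "\<bar>h n\<bar> \<le> 1" "\<bar>- h n\<bar> \<le> 1" for n by (auto simp: h_def)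
  have sh: "continuous_on UNIV (\<lambda>z. f (z + of_real c * e))" if "continuous_on UNIV f" for f :: "complex \<Rightarrow> real" and c
    by (rule continuous_on_compose2[OF that]) (auto intro!: continuous_intros)
  have int_bg: "integrable lborel (\<lambda>z. b z * g (z + of_real c * e))" for c
  proof (rule integrable_vanishing_outside_cball[of "a - of_real c * e" R])
    show "continuous_on (cball (a - of_real c * e) R) (\<lambda>z. b z * g (z + of_real c * e))"
      by (intro continuous_intros continuous_on_subset[OF bc] continuous_on_subset[OF sh[OF gc]]) auto
    fix z assume "z \<notin> cball (a - of_real c * e) R"
    then have "z + of_real c * e \<notin> cball a R" by (simp add: dist_norm algebra_simps)
    then show "b z * g (z + of_real c * e) = 0" using gs by simp
  qed
  have int_gb: "integrable lborel (\<lambda>z. g z * b (z + of_real c * e))" for c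
    by (rule integrable_vanishing_outside_cball[of a R])
      (use gs in \<open>auto intro!: continuous_intros continuous_on_subset[OF sh[OF bc]] continuous_on_subset[OF gc]\<close>)
  have translate: "(\<integral>z. b z * g (z + of_real c * e) \<partial>lborel) = (\<integral>z. g z * b (z + of_real (- c) * e) \<partial>lborel)" for c
  proof -
    have "(\<lambda>x. g x * b (x + of_real (- c) * e)) \<in> borel_measurable borel"
      by (intro borel_measurable_continuous_onI continuous_on_mult sh bc gc)
    from lborel_integral_affine[OF this, of 1 "of_real c * e"] show ?thesis by (simp add: algebra_simps)
  qed
  have eq: "(\<integral>z. b z * ((g (z + of_real (h n) * e) - g z) / h n) \<partial>lborel) =
      - (\<integral>z. g z * ((b (z + of_real (- h n) * e) - b z) / - h n) \<partial>lborel)" for n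
  proof -
    have "(\<integral>z. b z * ((g (z + of_real (h n) * e) - g z) / h n) \<partial>lborel) =
        ((\<integral>z. b z * g (z + of_real (h n) * e) \<partial>lborel) - (\<integral>z. b z * g (z + of_real 0 * e) \<partial>lborel)) / h n"
      using int_bg[of "h n"] int_bg[of 0] by (simp add: right_diff_distrib diff_divide_distrib)
    also have "\<dots> = ((\<integral>z. g z * b (z + of_real (- h n) * e) \<partial>lborel) - (\<integral>z. g z * b (z + of_real 0 * e) \<partial>lborel)) / h n"
      by (simp only: translate) simp
    also have "\<dots> = - (\<integral>z. g z * ((b (z + of_real (- h n) * e) - b z) / - h n) \<partial>lborel)"
      using int_gb[of "- h n"] int_gb[of 0] by (simp add: right_diff_distrib diff_divide_distrib)
    finally show ?thesis .
  qed
  have "(\<lambda>n. \<integral>z. b z * ((g (z + of_real (h n) * e) - g z) / h n) \<partial>lborel) \<longlonglongrightarrow> (\<integral>z. b z * g1 z \<partial>lborel)"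
  proof (rule integral_difference_quotient_tendsto[OF e gc g1c gd bc _ h(1) h1(1), of a "R + 1"])
    fix z and t :: real assume "z \<notin> cball a (R + 1)" "\<bar>t\<bar> \<le> 1"
    moreover have "dist a z \<le> dist a (z + of_real t * e) + \<bar>t\<bar>"
      using dist_triangle[of a z "z + of_real t * e"] e by (simp add: dist_norm norm_mult)
    ultimately show "b z * (g (z + of_real t * e) - g z) = 0" using gs by simp
  qed
  moreover have "(\<lambda>n. - (\<integral>z. g z * ((b (z + of_real (- h n) * e) - b z) / - h n) \<partial>lborel)) \<longlonglongrightarrow> - (\<integral>z. g z * b1 z \<partial>lborel)"
    by (intro tendsto_minus integral_difference_quotient_tendsto[OF e bc b1c bd gc _ h(2) h1(2), of a R]) (use gs in simp)
  ultimately have "(\<integral>z. b z * g1 z \<partial>lborel) = - (\<integral>z. g z * b1 z \<partial>lborel)"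
    unfolding eq by (rule LIMSEQ_unique)
  then show ?thesis by (simp add: mult.commute)
qed

lemma smooth_fn_iter_pd:
  assumes "smooth_fn f"
  shows "continuous_on UNIV (iter_pd bs f)"
    and "\<And>z. e \<in> {1, \<i>} \<Longrightarrow> ((\<lambda>t. iter_pd bs f (z + of_real t * e)) has_real_derivative pd e (iter_pd bs f) z) (at 0)"
  using assms unfolding smooth_fn_def by (auto intro!: pd_DERIV)

lemma iter_pd_eq_0_outside:
  assumes "smooth_fn f" "\<And>z. z \<notin> cball a R \<Longrightarrow> f z = 0"
  shows "z \<notin> cball a R \<Longrightarrow> iter_pd bs f z = 0"
proof (induction bs arbitrary: z)
  case Nil then show ?case using assms by simp
next
  case (Cons c bs)
  define e where "e = (if c then \<i> else 1)"
  have e: "e \<in> {1, \<i>}" "cmod e = 1" by (auto simp: e_def)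
  have "pd e (iter_pd bs f) z = 0"
    by (rule directional_deriv_eq_0_outside[OF e(2) smooth_fn_iter_pd(2)[OF assms(1) e(1)]]) (use Cons in auto)
  then show ?case by (simp add: e_def)
qed

lemma integration_by_parts_second:
  fixes b b1 b11 :: "complex \<Rightarrow> real"
  assumes f: "smooth_fn f" and fs: "\<And>z. z \<notin> cball a R \<Longrightarrow> f z = 0"
    and e: "e \<in> {1, \<i>}"
    and bc: "continuous_on UNIV b" and b1c: "continuous_on UNIV b1" and b11c: "continuous_on UNIV b11"
    and bd: "\<And>z. ((\<lambda>t. b (z + of_real t * e)) has_real_derivative b1 z) (at 0)"
    and b1d: "\<And>z. ((\<lambda>t. b1 (z + of_real t * e)) has_real_derivative b11 z) (at 0)"
  shows "(\<integral>z. b z * pd e (pd e f) z \<partial>lborel) = (\<integral>z. b11 z * f z \<partial>lborel)"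
proof -
  have e1: "cmod e = 1" using e by auto
  have c0: "continuous_on UNIV (iter_pd [] f)" by (rule smooth_fn_iter_pd(1)[OF f])
  have c1: "continuous_on UNIV (pd e f)"
    using smooth_fn_iter_pd(1)[OF f, of "[e = \<i>]"] e by auto
  have c2: "continuous_on UNIV (pd e (pd e f))"
    using smooth_fn_iter_pd(1)[OF f, of "[e = \<i>, e = \<i>]"] e by auto
  have d0: "((\<lambda>t. f (z + of_real t * e)) has_real_derivative pd e f z) (at 0)" for z
    using smooth_fn_iter_pd(2)[OF f e, of "[]"] by simp
  have d1: "((\<lambda>t. pd e f (z + of_real t * e)) has_real_derivative pd e (pd e f) z) (at 0)" for z
    using smooth_fn_iter_pd(2)[OF f e, of "[e = \<i>]"] e by auto
  have s1: "pd e f z = 0" if "z \<notin> cball a R" for z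
    using iter_pd_eq_0_outside[OF f fs that, of "[e = \<i>]"] e by auto
  have "(\<integral>z. b z * pd e (pd e f) z \<partial>lborel) = - (\<integral>z. b1 z * pd e f z \<partial>lborel)"
    by (rule integration_by_parts_directional[OF e1 bc b1c bd c1 c2 d1 s1])
  also have "(\<integral>z. b1 z * pd e f z \<partial>lborel) = - (\<integral>z. b11 z * f z \<partial>lborel)"
    by (rule integration_by_parts_directional[OF e1 b1c b11c b1d c0[simplified] c1 d0 fs])
  finally show ?thesis by simp
qed

lemma integration_by_parts_laplacian:
  fixes b bx bxx bi bii :: "complex \<Rightarrow> real"
  assumes f: "smooth_fn f" and fs: "\<And>z. z \<notin> cball a R \<Longrightarrow> f z = 0"
    and bc: "continuous_on UNIV b" and bxc: "continuous_on UNIV bx" and bxxc: "continuous_on UNIV bxx"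
    and bic: "continuous_on UNIV bi" and biic: "continuous_on UNIV bii"
    and bxd: "\<And>z. ((\<lambda>t. b (z + of_real t * 1)) has_real_derivative bx z) (at 0)"
    and bxxd: "\<And>z. ((\<lambda>t. bx (z + of_real t * 1)) has_real_derivative bxx z) (at 0)"
    and bid: "\<And>z. ((\<lambda>t. b (z + of_real t * \<i>)) has_real_derivative bi z) (at 0)"
    and biid: "\<And>z. ((\<lambda>t. bi (z + of_real t * \<i>)) has_real_derivative bii z) (at 0)"
  shows "(\<integral>z. b z * laplacian f z \<partial>lborel) = (\<integral>z. (bxx z + bii z) * f z \<partial>lborel)"
proof -
  have c2: "continuous_on UNIV (pd e (pd e f))" if "e \<in> {1, \<i>}" for e
    using smooth_fn_iter_pd(1)[OF f, of "[e = \<i>, e = \<i>]"] that by auto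
  have s2: "pd e (pd e f) z = 0" if "z \<notin> cball a R" "e \<in> {1, \<i>}" for z e
    using iter_pd_eq_0_outside[OF f fs that(1), of "[e = \<i>, e = \<i>]"] that(2) by auto
  have i1: "integrable lborel (\<lambda>z. b z * pd e (pd e f) z)" if "e \<in> {1, \<i>}" for e
    by (rule integrable_vanishing_outside_cball[of a R]) (use that s2 in \<open>auto intro!: continuous_intros continuous_on_subset[OF bc] continuous_on_subset[OF c2[OF that]]\<close>)
  have fc: "continuous_on UNIV f" using smooth_fn_iter_pd(1)[OF f, of "[]"] by simp
  have i2: "integrable lborel (\<lambda>z. bb z * f z)" if "continuous_on UNIV bb" for bb
    by (rule integrable_vanishing_outside_cball[of a R]) (use that fs in \<open>auto intro!: continuous_intros continuous_on_subset[OF that] continuous_on_subset[OF fc]\<close>)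
  have "(\<integral>z. b z * laplacian f z \<partial>lborel) = (\<integral>z. b z * pd 1 (pd 1 f) z + b z * pd \<i> (pd \<i> f) z \<partial>lborel)"
    by (simp add: laplacian_def algebra_simps)
  also have "\<dots> = (\<integral>z. b z * pd 1 (pd 1 f) z \<partial>lborel) + (\<integral>z. b z * pd \<i> (pd \<i> f) z \<partial>lborel)"
    using i1 by simp
  also have "\<dots> = (\<integral>z. bxx z * f z \<partial>lborel) + (\<integral>z. bii z * f z \<partial>lborel)"
    using integration_by_parts_second[OF f fs insertI1 bc bxc bxxc bxd bxxd] integration_by_parts_second[OF f fs insertI2[OF insertI1] bc bic biic bid biid] by simp
  also have "\<dots> = (\<integral>z. (bxx z + bii z) * f z \<partial>lborel)"
    using i2[OF bxxc] i2[OF biic] by (simp add: distrib_right)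
  finally show ?thesis .
qed

lemma integration_by_parts_radial:
  assumes f: "smooth_fn f" and fs: "\<And>z. z \<notin> cball a R \<Longrightarrow> f z = 0"
    and D: "\<And>x. (D has_real_derivative D1 x) (at x)"
    and D1: "\<And>x. (D1 has_real_derivative D2 x) (at x)"
    and D2c: "continuous_on UNIV D2"
  shows "(\<integral>z. D ((cmod (z - y))\<^sup>2) * laplacian f z \<partial>lborel) =
         (\<integral>z. 4 * ((cmod (z - y))\<^sup>2 * D2 ((cmod (z - y))\<^sup>2) + D1 ((cmod (z - y))\<^sup>2)) * f z \<partial>lborel)"
proof -
  have Dc: "continuous_on UNIV D" using D by (meson DERIV_continuous continuous_at_imp_continuous_on)
  have D1c: "continuous_on UNIV D1" using D1 by (meson DERIV_continuous continuous_at_imp_continuous_on)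
  have D': "\<And>x. ((\<lambda>x. D (1 * x)) has_real_derivative D1 x) (at x)" using D by simp
  have cr: "continuous_on UNIV (\<lambda>z. (cmod (z - y))\<^sup>2)" by (intro continuous_intros)
  have c1: "continuous_on UNIV (\<lambda>z. G ((cmod (z - y))\<^sup>2))" if "continuous_on UNIV G" for G
    by (rule continuous_on_compose2[OF that cr]) auto
  have "(\<integral>z. D ((cmod (z - y))\<^sup>2) * laplacian f z \<partial>lborel) =
     (\<integral>z. ((D2 ((cmod (z - y))\<^sup>2) * (2 * (Re z - Re y)) * (2 * (Re z - Re y)) + 2 * D1 ((cmod (z - y))\<^sup>2)) +
           (D2 ((cmod (z - y))\<^sup>2) * (2 * (Im z - Im y)) * (2 * (Im z - Im y)) + 2 * D1 ((cmod (z - y))\<^sup>2))) * f z \<partial>lborel)"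
  proof (rule integration_by_parts_laplacian[OF f fs])
    show "continuous_on UNIV (\<lambda>z. D ((cmod (z - y))\<^sup>2))" by (rule c1[OF Dc])
    show "continuous_on UNIV (\<lambda>z. D1 ((cmod (z - y))\<^sup>2) * (2 * (Re z - Re y)))"
      by (intro continuous_intros c1[OF D1c])
    show "continuous_on UNIV (\<lambda>z. D1 ((cmod (z - y))\<^sup>2) * (2 * (Im z - Im y)))"
      by (intro continuous_intros c1[OF D1c])
    show "continuous_on UNIV (\<lambda>z. D2 ((cmod (z - y))\<^sup>2) * (2 * (Re z - Re y)) * (2 * (Re z - Re y)) + 2 * D1 ((cmod (z - y))\<^sup>2))"
      by (intro continuous_intros c1[OF D1c] c1[OF D2c])
    show "continuous_on UNIV (\<lambda>z. D2 ((cmod (z - y))\<^sup>2) * (2 * (Im z - Im y)) * (2 * (Im z - Im y)) + 2 * D1 ((cmod (z - y))\<^sup>2))"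
      by (intro continuous_intros c1[OF D1c] c1[OF D2c])
    fix z
    show "((\<lambda>t. D ((cmod (z + of_real t * 1 - y))\<^sup>2)) has_real_derivative D1 ((cmod (z - y))\<^sup>2) * (2 * (Re z - Re y))) (at 0)"
      using radial_DERIV_Re[OF D', of 1 z y] by simp
    show "((\<lambda>t. D ((cmod (z + of_real t * \<i> - y))\<^sup>2)) has_real_derivative D1 ((cmod (z - y))\<^sup>2) * (2 * (Im z - Im y))) (at 0)"
      using radial_DERIV_Im[OF D', of 1 z y] by simp
    show "((\<lambda>t. D1 ((cmod (z + of_real t * 1 - y))\<^sup>2) * (2 * (Re (z + of_real t * 1) - Re y))) has_real_derivative
      D2 ((cmod (z - y))\<^sup>2) * (2 * (Re z - Re y)) * (2 * (Re z - Re y)) + 2 * D1 ((cmod (z - y))\<^sup>2)) (at 0)"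
      by (rule radial_second_Re[OF D1])
    show "((\<lambda>t. D1 ((cmod (z + of_real t * \<i> - y))\<^sup>2) * (2 * (Im (z + of_real t * \<i>) - Im y))) has_real_derivative
      D2 ((cmod (z - y))\<^sup>2) * (2 * (Im z - Im y)) * (2 * (Im z - Im y)) + 2 * D1 ((cmod (z - y))\<^sup>2)) (at 0)"
      by (rule radial_second_Im[OF D1])
  qed
  also have "\<dots> = (\<integral>z. 4 * ((cmod (z - y))\<^sup>2 * D2 ((cmod (z - y))\<^sup>2) + D1 ((cmod (z - y))\<^sup>2)) * f z \<partial>lborel)"
  proof (rule Bochner_Integration.integral_cong[OF refl])
    fix z
    have r2: "(cmod (z - y))\<^sup>2 = (Re z - Re y)\<^sup>2 + (Im z - Im y)\<^sup>2" by (simp add: cmod_power2_Re_Im)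
    show "((D2 ((cmod (z - y))\<^sup>2) * (2 * (Re z - Re y)) * (2 * (Re z - Re y)) + 2 * D1 ((cmod (z - y))\<^sup>2)) +
           (D2 ((cmod (z - y))\<^sup>2) * (2 * (Im z - Im y)) * (2 * (Im z - Im y)) + 2 * D1 ((cmod (z - y))\<^sup>2))) * f z =
          4 * ((cmod (z - y))\<^sup>2 * D2 ((cmod (z - y))\<^sup>2) + D1 ((cmod (z - y))\<^sup>2)) * f z"
      unfolding r2 by (simp add: algebra_simps power2_eq_square)
  qed
  finally show ?thesis .
qed

lemma integration_by_parts_quadratic:
  assumes f: "smooth_fn f" and fs: "\<And>z. z \<notin> cball a R' \<Longrightarrow> f z = 0"
  shows "(\<integral>z. (cmod (z - y))\<^sup>2 / 4 * laplacian f z \<partial>lborel) = (\<integral>z. f z \<partial>lborel)"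
proof -
  have D: "((\<lambda>t. t / 4) has_real_derivative 1/4) (at x)" for x :: real
    by (auto intro!: derivative_eq_intros)
  have D1: "((\<lambda>t. 1/4) has_real_derivative 0) (at x)" for x :: real
    by (auto intro!: derivative_eq_intros)
  have D2c: "continuous_on UNIV (\<lambda>x::real. 0::real)" by (intro continuous_intros)
  show ?thesis
    using integration_by_parts_radial[OF f fs D D1 D2c, where y=y] by simp
qed

lemma integral_green_cutoff_le:
  assumes "0 < e" "e \<le> r"
  shows "(\<integral>z. green_cutoff q r e z \<partial>lborel) \<le> r\<^sup>2 / 4 * mollifier_mass"
proof -
  have r: "r > 0" using assms by simp
  have fs: "\<And>z. z \<notin> cball q r \<Longrightarrow> green_cutoff q r e z = 0" using green_cutoff_outside[OF assms] by blast
  have wc: "continuous_on (cball q r) (\<lambda>z. (cmod (z - q))\<^sup>2 / 4)" by (intro continuous_intros) auto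
  have "(\<integral>z. green_cutoff q r e z \<partial>lborel) = (\<integral>z. (cmod (z - q))\<^sup>2 / 4 * laplacian (green_cutoff q r e) z \<partial>lborel)"
    by (rule integration_by_parts_quadratic[OF smooth_fn_green_cutoff fs, symmetric])
  also have "\<dots> = (\<integral>z. (cmod (z - q))\<^sup>2 / 4 * mollifier q r z \<partial>lborel) - (\<integral>z. (cmod (z - q))\<^sup>2 / 4 * mollifier q e z \<partial>lborel)"
    by (rule integral_mult_laplacian_green_cutoff[OF wc assms])
  also have "\<dots> \<le> r\<^sup>2 / 4 * mollifier_mass - 0 * mollifier_mass"
  proof (rule diff_mono)
    show "(\<integral>z. (cmod (z - q))\<^sup>2 / 4 * mollifier q r z \<partial>lborel) \<le> r\<^sup>2 / 4 * mollifier_mass"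
    proof (rule integral_mult_mollifier_le[OF wc r])
      fix z assume "z \<in> cball q r"
      then have "cmod (z - q) \<le> r" by (simp add: dist_norm norm_minus_commute)
      then have "(cmod (z - q))\<^sup>2 \<le> r\<^sup>2" by (intro power_mono) auto
      then show "(cmod (z - q))\<^sup>2 / 4 \<le> r\<^sup>2 / 4" by simp
    qed
    show "0 * mollifier_mass \<le> (\<integral>z. (cmod (z - q))\<^sup>2 / 4 * mollifier q e z \<partial>lborel)"
      by (rule integral_mult_mollifier_ge) (use assms in \<open>auto intro!: continuous_intros\<close>)
  qed
  finally show ?thesis by simp
qed

section \<open>Hopf lemma and strong maximum principle\<close>

definition hopf_barrier :: "real \<Rightarrow> complex \<Rightarrow> real \<Rightarrow> complex \<Rightarrow> real" where
  "hopf_barrier \<alpha> y R z = exp (- \<alpha> * (cmod (z - y))\<^sup>2) - exp (- \<alpha> * R\<^sup>2)"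

definition hopf_barrier_lap :: "real \<Rightarrow> complex \<Rightarrow> complex \<Rightarrow> real" where
  "hopf_barrier_lap \<alpha> y z = 4 * ((cmod (z - y))\<^sup>2 * \<alpha>\<^sup>2 - \<alpha>) * exp (- \<alpha> * (cmod (z - y))\<^sup>2)"

lemma continuous_hopf_barrier: "continuous_on UNIV (hopf_barrier \<alpha> y R)"
  unfolding hopf_barrier_def by (intro continuous_intros)

lemma continuous_hopf_barrier_lap: "continuous_on UNIV (hopf_barrier_lap \<alpha> y)"
  unfolding hopf_barrier_lap_def by (intro continuous_intros)

lemma integration_by_parts_hopf_barrier:
  assumes f: "smooth_fn f" and fs: "\<And>z. z \<notin> cball a R' \<Longrightarrow> f z = 0"
  shows "(\<integral>z. hopf_barrier \<alpha> y R z * laplacian f z \<partial>lborel) = (\<integral>z. hopf_barrier_lap \<alpha> y z * f z \<partial>lborel)"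
proof -
  have D: "((\<lambda>t. exp (- \<alpha> * t) - exp (- \<alpha> * R\<^sup>2)) has_real_derivative - \<alpha> * exp (- \<alpha> * x)) (at x)" for x
    by (auto intro!: derivative_eq_intros)
  have D1: "((\<lambda>t. - \<alpha> * exp (- \<alpha> * t)) has_real_derivative \<alpha>\<^sup>2 * exp (- \<alpha> * x)) (at x)" for x
    by (auto intro!: derivative_eq_intros simp: power2_eq_square)
  have D2c: "continuous_on UNIV (\<lambda>x. \<alpha>\<^sup>2 * exp (- \<alpha> * x))" by (intro continuous_intros)
  show ?thesis
    using integration_by_parts_radial[OF f fs D D1 D2c, where y=y]
    by (simp add: hopf_barrier_def hopf_barrier_lap_def algebra_simps)
qed

lemma hopf_barrier_lap_minus_pos:
  assumes "K \<ge> 0" and "4 * \<alpha>\<^sup>2 * (cmod (z - y))\<^sup>2 - 4 * \<alpha> - K > 0"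
  shows "hopf_barrier_lap \<alpha> y z - K * hopf_barrier \<alpha> y R z > 0"
proof -
  let ?t = "(cmod (z - y))\<^sup>2"
  have "hopf_barrier_lap \<alpha> y z - K * hopf_barrier \<alpha> y R z =
      exp (- \<alpha> * ?t) * (4 * \<alpha>\<^sup>2 * ?t - 4 * \<alpha> - K) + K * exp (- \<alpha> * R\<^sup>2)"
    by (simp add: hopf_barrier_lap_def hopf_barrier_def algebra_simps)
  also have "\<dots> > 0" using assms by (intro add_pos_nonneg mult_pos_pos) auto
  finally show ?thesis .
qed

lemma weak_ineq_barrier_minus:
  assumes hc: "continuous_on (cball q r) h" and e: "0 < e" "e \<le> r"
    and weak: "(\<integral>z. h z * laplacian (green_cutoff q r e) z \<partial>lborel) \<le> K * (\<integral>z. h z * green_cutoff q r e z \<partial>lborel)"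
  shows "(\<integral>z. (m * hopf_barrier \<alpha> y R z - h z) * laplacian (green_cutoff q r e) z \<partial>lborel) \<ge>
         (\<integral>z. (m * hopf_barrier_lap \<alpha> y z - K * h z) * green_cutoff q r e z \<partial>lborel)"
proof -
  have bc: "continuous_on (cball q r) (hopf_barrier \<alpha> y R)" "continuous_on (cball q r) (hopf_barrier_lap \<alpha> y)"
    by (auto intro: continuous_on_subset[OF continuous_hopf_barrier] continuous_on_subset[OF continuous_hopf_barrier_lap])
  have "(\<integral>z. (m * hopf_barrier \<alpha> y R z - h z) * laplacian (green_cutoff q r e) z \<partial>lborel) =
      m * (\<integral>z. hopf_barrier \<alpha> y R z * laplacian (green_cutoff q r e) z \<partial>lborel)
      - (\<integral>z. h z * laplacian (green_cutoff q r e) z \<partial>lborel)"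
    using integrable_mult_laplacian_green_cutoff[OF hc e] integrable_mult_laplacian_green_cutoff[OF bc(1) e]
    by (simp add: algebra_simps)
  also have "(\<integral>z. hopf_barrier \<alpha> y R z * laplacian (green_cutoff q r e) z \<partial>lborel) =
      (\<integral>z. hopf_barrier_lap \<alpha> y z * green_cutoff q r e z \<partial>lborel)"
    using green_cutoff_outside[OF e] by (intro integration_by_parts_hopf_barrier[OF smooth_fn_green_cutoff]) blast
  also have "m * (\<integral>z. hopf_barrier_lap \<alpha> y z * green_cutoff q r e z \<partial>lborel)
      - (\<integral>z. h z * laplacian (green_cutoff q r e) z \<partial>lborel) \<ge>
      m * (\<integral>z. hopf_barrier_lap \<alpha> y z * green_cutoff q r e z \<partial>lborel) - K * (\<integral>z. h z * green_cutoff q r e z \<partial>lborel)"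
    using weak by linarith
  also have "m * (\<integral>z. hopf_barrier_lap \<alpha> y z * green_cutoff q r e z \<partial>lborel) - K * (\<integral>z. h z * green_cutoff q r e z \<partial>lborel) =
      (\<integral>z. (m * hopf_barrier_lap \<alpha> y z - K * h z) * green_cutoff q r e z \<partial>lborel)"
    using integrable_mult_green_cutoff[OF hc e] integrable_mult_green_cutoff[OF bc(2) e]
    by (simp add: algebra_simps)
  finally show ?thesis .
qed

lemma annulus_interior_cball:
  assumes "R / 2 < dist y z" "dist y z < R"
  obtains rr where "rr > 0" "cball z rr \<subseteq> cball y R - ball y (R/2)" "\<And>r. r < rr \<Longrightarrow> cball z r \<subseteq> ball y R"
proof
  define rr where "rr = min (dist y z - R/2) (R - dist y z) / 2"
  show "rr > 0" using assms by (simp add: rr_def)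
  show "cball z rr \<subseteq> cball y R - ball y (R/2)"
  proof
    fix x assume "x \<in> cball z rr"
    moreover have "dist y z \<le> dist y x + dist z x" "dist y x \<le> dist y z + dist z x"
      by (metis dist_commute dist_triangle)+
    ultimately show "x \<in> cball y R - ball y (R/2)" unfolding rr_def by auto
  qed
  fix r assume r: "r < rr"
  show "cball z r \<subseteq> ball y R"
  proof
    fix x assume "x \<in> cball z r"
    then have "dist z x \<le> r" by simp
    moreover have "dist y x \<le> dist y z + dist z x" by (rule dist_triangle)
    moreover have "2 * r < R - dist y z" using r unfolding rr_def by (simp add: min_def split: if_splits)
    ultimately show "x \<in> ball y R" using assms unfolding mem_ball by linarith
  qed
qed

text \<open>Comparison with the barrier on the annulus \<open>R/2 \<le> \<bar>z - y\<bar> \<le> R\<close>: at an interior negative minimum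
  of \<open>h - m * hopf_barrier\<close> the weak inequality for \<open>h\<close> and the choice of \<open>\<alpha>\<close> give a weakly
  subharmonic function with a strict local maximum.\<close>
lemma hopf_barrier_below:
  fixes h :: "complex \<Rightarrow> real"
  assumes R: "R > 0" and K: "K \<ge> 0"
    and alK: "\<And>t. t \<ge> R\<^sup>2 / 4 \<Longrightarrow> 4 * \<alpha>\<^sup>2 * t - 4 * \<alpha> - K > 0"
    and m: "m > 0"
    and hc: "continuous_on (cball y R) h"
    and hin: "\<And>z. dist y z = R / 2 \<Longrightarrow> h z \<ge> m * hopf_barrier \<alpha> y R z"
    and hnn: "\<And>z. z \<in> cball y R \<Longrightarrow> h z \<ge> 0"
    and weak: "\<And>q r e. 0 < e \<Longrightarrow> e \<le> r \<Longrightarrow> cball q r \<subseteq> ball y R \<Longrightarrow>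
        (\<integral>z. h z * laplacian (green_cutoff q r e) z \<partial>lborel) \<le> K * (\<integral>z. h z * green_cutoff q r e z \<partial>lborel)"
    and z: "R / 2 \<le> dist y z" "dist y z \<le> R"
  shows "h z \<ge> m * hopf_barrier \<alpha> y R z"
proof -
  define A where "A = cball y R - ball y (R/2)"
  have A: "compact A" "A \<noteq> {}" "A \<subseteq> cball y R"
  proof -
    show "compact A" unfolding A_def by (intro compact_diff compact_cball open_ball)
    have "y + of_real R \<in> A" using R by (simp add: A_def dist_norm)
    then show "A \<noteq> {}" by blast
    show "A \<subseteq> cball y R" by (auto simp: A_def)
  qed
  define v where "v z = h z - m * hopf_barrier \<alpha> y R z" for z
  have vc: "continuous_on (cball y R) v" unfolding v_def
    by (intro continuous_intros hc continuous_on_subset[OF continuous_hopf_barrier]) auto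
  obtain zs where zs: "zs \<in> A" "\<And>z. z \<in> A \<Longrightarrow> v zs \<le> v z"
    using continuous_attains_inf[OF A(1) A(2) continuous_on_subset[OF vc A(3)]] by blast
  have "v zs \<ge> 0"
  proof (rule ccontr)
    assume neg: "\<not> v zs \<ge> 0"
    have ds: "R/2 \<le> dist y zs" "dist y zs \<le> R" using zs(1) by (auto simp: A_def)
    have n1: "dist y zs \<noteq> R / 2" using hin[of zs] neg by (auto simp: v_def)
    have n2: "dist y zs \<noteq> R"
      using hnn[of zs] ds neg by (auto simp: v_def hopf_barrier_def dist_norm norm_minus_commute)
    obtain rr where rr: "rr > 0" and ball_in: "cball zs rr \<subseteq> A"
      and ball_in2: "\<And>r. r < rr \<Longrightarrow> cball zs r \<subseteq> ball y R"
      using annulus_interior_cball[of R y zs] ds n1 n2 unfolding A_def by (metis order_le_less)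
    have hcA: "continuous_on (cball zs rr) h" using hc ball_in A(3) by (auto intro: continuous_on_subset)
    show False
    proof (rule weak_laplacian_pos_no_local_max[OF rr, of zs "\<lambda>z. - v z" "\<lambda>z. m * hopf_barrier_lap \<alpha> y z - K * h z"])
      show "continuous_on (cball zs rr) (\<lambda>z. - v z)"
        using vc ball_in A(3) by (auto intro!: continuous_intros intro: continuous_on_subset)
      show "\<And>z. z \<in> cball zs rr \<Longrightarrow> - v z \<le> - v zs" using zs(2) ball_in by auto
      show "continuous_on (cball zs rr) (\<lambda>z. m * hopf_barrier_lap \<alpha> y z - K * h z)"
        by (intro continuous_intros hcA continuous_on_subset[OF continuous_hopf_barrier_lap]) auto
      have "(R/2)\<^sup>2 \<le> (cmod (zs - y))\<^sup>2" using ds R by (intro power_mono) (auto simp: dist_norm norm_minus_commute)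
      then have "hopf_barrier_lap \<alpha> y zs - K * hopf_barrier \<alpha> y R zs > 0"
        by (intro hopf_barrier_lap_minus_pos K alK) (simp add: power2_eq_square)
      moreover have "K * (- v zs) \<ge> 0" using neg K by (simp add: mult_nonneg_nonpos)
      moreover have "m * hopf_barrier_lap \<alpha> y zs - K * h zs =
          m * (hopf_barrier_lap \<alpha> y zs - K * hopf_barrier \<alpha> y R zs) + K * (- v zs)"
        by (simp add: v_def algebra_simps)
      ultimately show "m * hopf_barrier_lap \<alpha> y zs - K * h zs > 0"
        using m by (metis add_pos_nonneg mult_pos_pos)
    next
      fix r e assume re: "0 < e" "e \<le> r" "r < rr"
      have "continuous_on (cball zs r) h" using hcA re by (auto intro: continuous_on_subset)
      from weak_ineq_barrier_minus[OF this re(1,2) weak[OF re(1,2) ball_in2[OF re(3)]]]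
      show "(\<integral>z. (m * hopf_barrier_lap \<alpha> y z - K * h z) * green_cutoff zs r e z \<partial>lborel)
          \<le> (\<integral>z. - v z * laplacian (green_cutoff zs r e) z \<partial>lborel)"
        by (simp add: v_def)
    qed
  qed
  moreover have "z \<in> A" using z by (simp add: A_def)
  ultimately have "v z \<ge> 0" using zs(2) by force
  then show ?thesis by (simp add: v_def)
qed

lemma cmod_diff_power2: "(cmod (a - b))\<^sup>2 = (cmod a)\<^sup>2 - 2 * Re (a * cnj b) + (cmod b)\<^sup>2"
  unfolding cmod_power2_Re_Im by (simp add: power2_eq_square algebra_simps)

text \<open>Directions \<open>w\<close> along which, for \<open>r \<le> R/2\<close>, the point \<open>q + r w\<close> lies in the outer annulus of the
  disc \<open>cball (q + R n) R\<close> at depth proportional to \<open>r\<close> (see \<open>hopf_cone_geometry\<close>).\<close>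
definition hopf_cone :: "complex \<Rightarrow> complex set" where
  "hopf_cone n = {w. 1/4 < (cmod w)\<^sup>2 \<and> (cmod w)\<^sup>2 < 1 \<and> Re (w * cnj n) > cmod w / 2}"

lemma open_hopf_cone: "open (hopf_cone n)"
  unfolding hopf_cone_def by (intro open_Collect_conj open_Collect_less continuous_intros) auto

lemma hopf_cone_geometry:
  fixes q n w :: complex
  assumes R: "R > 0" and n: "cmod n = 1" and r: "r > 0" "r \<le> R / 2"
    and "w \<in> hopf_cone n" and al: "\<alpha> > 0"
  shows "R / 2 \<le> dist (q + of_real R * n) (q + r *\<^sub>R w)"
    and "dist (q + of_real R * n) (q + r *\<^sub>R w) \<le> R"
    and "hopf_barrier \<alpha> (q + of_real R * n) R (q + r *\<^sub>R w) \<ge> exp (- \<alpha> * R\<^sup>2) * \<alpha> * r * R / 4"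
proof -
  have w: "1/4 < (cmod w)\<^sup>2" "(cmod w)\<^sup>2 < 1" "Re (w * cnj n) > cmod w / 2"
    using \<open>w \<in> hopf_cone n\<close> by (auto simp: hopf_cone_def)
  have w1: "cmod w < 1" using w(2) by (metis abs_norm_cancel abs_square_less_1)
  have w2: "cmod w > 1/2"
  proof (rule ccontr)
    assume "\<not> cmod w > 1/2"
    then have "(cmod w)\<^sup>2 \<le> (1/2)\<^sup>2" by (intro power_mono) auto
    then show False using w(1) by (simp add: power2_eq_square)
  qed
  define s where "s = dist (q + of_real R * n) (q + r *\<^sub>R w)"
  have s_eq: "s = cmod (r *\<^sub>R w - of_real R * n)" by (simp add: s_def dist_norm norm_minus_commute)
  have rw: "r * cmod w \<le> R / 2" using r w1 by (metis le_less_trans less_eq_real_def mult_less_cancel_left1 not_less)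
  have s2: "s\<^sup>2 = r\<^sup>2 * (cmod w)\<^sup>2 - 2 * r * R * Re (w * cnj n) + R\<^sup>2"
    unfolding s_eq cmod_diff_power2 using n R r
    by (simp add: norm_scaleR power_mult_distrib scaleR_conv_of_real mult.assoc)
       (simp add: algebra_simps norm_mult power_mult_distrib)
  have "2 * r * R * Re (w * cnj n) \<ge> 2 * r * R * (cmod w / 2)"
    using w(3) r R by (intro mult_left_mono) auto
  then have s2le: "s\<^sup>2 \<le> R\<^sup>2 - r * R * cmod w + r\<^sup>2 * (cmod w)\<^sup>2" using s2 by simp
  have "r\<^sup>2 * (cmod w)\<^sup>2 = (r * cmod w) * (r * cmod w)" by (simp add: power2_eq_square)
  also have "\<dots> \<le> (R / 2) * (r * cmod w)" using rw r by (intro mult_right_mono) auto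
  finally have "r\<^sup>2 * (cmod w)\<^sup>2 \<le> R * (r * cmod w) / 2" by simp
  then have key: "R\<^sup>2 - s\<^sup>2 \<ge> r * R * cmod w / 2" using s2le by (simp add: algebra_simps)
  have "r * R * cmod w / 2 \<ge> 0" using r R by simp
  then have "s\<^sup>2 \<le> R\<^sup>2" using key by linarith
  then have "s \<le> R" using R power2_le_imp_le[of s R] by simp
  then show "dist (q + of_real R * n) (q + r *\<^sub>R w) \<le> R" by (simp only: s_def)
  have "cmod (of_real R * n) - cmod (r *\<^sub>R w) \<le> cmod (r *\<^sub>R w - of_real R * n)"
    using norm_triangle_ineq2[of "of_real R * n" "r *\<^sub>R w"] by (simp only: norm_minus_commute)
  then have "R - r * cmod w \<le> s" using n r R by (simp add: s_eq norm_mult)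
  then have "R / 2 \<le> s" using rw by simp
  then show "R / 2 \<le> dist (q + of_real R * n) (q + r *\<^sub>R w)" by (simp only: s_def)
  have "exp (- \<alpha> * s\<^sup>2) = exp (- \<alpha> * R\<^sup>2) * exp (\<alpha> * (R\<^sup>2 - s\<^sup>2))"
    by (simp add: exp_add[symmetric] algebra_simps)
  also have "\<dots> \<ge> exp (- \<alpha> * R\<^sup>2) * (1 + \<alpha> * (R\<^sup>2 - s\<^sup>2))"
    by (intro mult_left_mono exp_ge_add_one_self) auto
  finally have "hopf_barrier \<alpha> (q + of_real R * n) R (q + r *\<^sub>R w) \<ge> exp (- \<alpha> * R\<^sup>2) * (\<alpha> * (R\<^sup>2 - s\<^sup>2))"
    unfolding hopf_barrier_def s_def by (simp add: dist_norm norm_minus_commute algebra_simps)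
  moreover have "\<alpha> * (R\<^sup>2 - s\<^sup>2) \<ge> \<alpha> * (r * R / 4)"
  proof -
    have "r * R * cmod w / 2 \<ge> r * R * (1/2) / 2" using w2 r R by (intro divide_right_mono mult_left_mono) auto
    then have "R\<^sup>2 - s\<^sup>2 \<ge> r * R / 4" using key by (simp add: algebra_simps)
    then show ?thesis using al by (intro mult_left_mono) auto
  qed
  then have "exp (- \<alpha> * R\<^sup>2) * (\<alpha> * (R\<^sup>2 - s\<^sup>2)) \<ge> exp (- \<alpha> * R\<^sup>2) * (\<alpha> * (r * R / 4))"
    by (rule mult_left_mono) auto
  moreover have "exp (- \<alpha> * R\<^sup>2) * (\<alpha> * (r * R / 4)) = exp (- \<alpha> * R\<^sup>2) * \<alpha> * r * R / 4" by simp
  ultimately show "hopf_barrier \<alpha> (q + of_real R * n) R (q + r *\<^sub>R w) \<ge> exp (- \<alpha> * R\<^sup>2) * \<alpha> * r * R / 4"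
    by linarith
qed

text \<open>The zero \<open>q\<close> of \<open>h\<close> nearest to a point \<open>x\<close> with \<open>h x > 0\<close> satisfies an interior disc condition:
  the disc with diameter \<open>[q, x]\<close> touches the zero set only at \<open>q\<close>.\<close>
lemma zero_set_interior_ball:
  fixes h :: "complex \<Rightarrow> real"
  assumes rho: "rho > 0" and hc: "continuous_on (cball z0 rho) h"
    and hnn: "\<And>z. z \<in> cball z0 rho \<Longrightarrow> h z \<ge> 0" and h0: "h z0 = 0"
    and x: "x \<in> ball z0 (rho/4)" "h x \<noteq> 0"
  obtains q n R where "R > 0" "cmod n = 1" "h q = 0" "q \<in> cball z0 (rho/2)"
    "cball (q + of_real R * n) R \<subseteq> cball z0 (rho/2)"
    "\<And>z. dist (q + of_real R * n) z = R / 2 \<Longrightarrow> h z > 0"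
proof -
  define Z where "Z = {z \<in> cball z0 (rho/2). h z = 0}"
  have Zc: "closed Z" unfolding Z_def
    by (rule continuous_closed_preimage_constant) (use hc rho in \<open>auto intro: continuous_on_subset\<close>)
  have z0Z: "z0 \<in> Z" using rho h0 by (simp add: Z_def)
  obtain q where q: "q \<in> Z" "\<And>z. z \<in> Z \<Longrightarrow> dist x q \<le> dist x z"
    using distance_attains_inf[OF Zc, of x] z0Z by blast
  define d where "d = dist x q"
  have d0: "d > 0" using q x by (auto simp: d_def Z_def)
  have dle: "d < rho/4" using q(2)[OF z0Z] x by (simp add: d_def dist_commute)
  have hq: "h q = 0" and qin: "q \<in> cball z0 (rho/2)" using q by (auto simp: Z_def)
  have hpos: "h z > 0" if "z \<in> ball x d" for z
  proof -
    have "dist z0 z \<le> dist z0 x + dist x z" by (rule dist_triangle)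
    then have zin: "z \<in> cball z0 (rho/2)" using that x dle by auto
    have "z \<notin> Z" using q(2)[of z] that by (auto simp: d_def)
    then have "h z \<noteq> 0" using zin by (simp add: Z_def)
    moreover have "h z \<ge> 0" using hnn zin rho by auto
    ultimately show ?thesis by simp
  qed
  define R where "R = d / 2"
  define n where "n = (x - q) / of_real d"
  have R: "R > 0" using d0 by (simp add: R_def)
  have n: "cmod n = 1" using d0 by (simp add: n_def norm_divide d_def dist_norm)
  define y where "y = q + of_real R * n"
  have y_eq: "y = (x + q) / 2" using d0 by (simp add: y_def n_def R_def field_simps)
  have dxy: "dist x y = R" using d0 by (simp add: y_eq R_def d_def dist_norm field_simps norm_divide)
  have "cball y R \<subseteq> cball z0 (rho/2)"
  proof
    fix z assume "z \<in> cball y R"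
    moreover have "dist z0 z \<le> dist z0 x + dist x y + dist y z"
      using dist_triangle[of z0 z x] dist_triangle[of x z y] by linarith
    ultimately show "z \<in> cball z0 (rho/2)" using x dxy dle R_def by auto
  qed
  moreover have "h z > 0" if "dist y z = R / 2" for z
  proof -
    have "dist x z \<le> dist x y + dist y z" by (rule dist_triangle)
    then have "dist x z < d" using that dxy d0 unfolding R_def by linarith
    then show "h z > 0" using hpos by simp
  qed
  ultimately show ?thesis using that[OF R n hq qin] unfolding y_def by blast
qed

lemma hopf_linear_growth:
  fixes h :: "complex \<Rightarrow> real"
  assumes R: "R > 0" and n: "cmod n = 1" and K: "K \<ge> 0"
    and hc: "continuous_on (cball (q + of_real R * n) R) h"
    and hnn: "\<And>z. z \<in> cball (q + of_real R * n) R \<Longrightarrow> h z \<ge> 0"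
    and hpos: "\<And>z. dist (q + of_real R * n) z = R / 2 \<Longrightarrow> h z > 0"
    and weak: "\<And>q' r e. 0 < e \<Longrightarrow> e \<le> r \<Longrightarrow> cball q' r \<subseteq> ball (q + of_real R * n) R \<Longrightarrow>
        (\<integral>z. h z * laplacian (green_cutoff q' r e) z \<partial>lborel) \<le> K * (\<integral>z. h z * green_cutoff q' r e z \<partial>lborel)"
  obtains c where "c > 0" "\<And>r w. 0 < r \<Longrightarrow> r \<le> R / 2 \<Longrightarrow> w \<in> hopf_cone n \<Longrightarrow> h (q + r *\<^sub>R w) \<ge> c * r"
proof -
  define y where "y = q + of_real R * n"
  define C where "C = sphere y (R/2)"
  have C: "compact C" "C \<noteq> {}" "C \<subseteq> cball y R" unfolding C_def using R by auto
  obtain zm where zm: "zm \<in> C" "\<And>z. z \<in> C \<Longrightarrow> h zm \<le> h z"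
    using continuous_attains_inf[OF C(1,2) continuous_on_subset[OF hc[folded y_def] C(3)]] by blast
  have m0: "h zm > 0" using hpos zm(1) by (simp add: C_def y_def)
  define \<alpha> where "\<alpha> = 1 + (8 + 4 * K) / R\<^sup>2"
  have "(8 + 4 * K) / R\<^sup>2 \<ge> 0" using K R by (intro divide_nonneg_pos) auto
  then have al: "\<alpha> \<ge> 1" "\<alpha> > 0" unfolding \<alpha>_def by auto
  have alR: "\<alpha> * R\<^sup>2 = R\<^sup>2 + (8 + 4 * K)" using R by (simp add: \<alpha>_def field_simps)
  have alK: "4 * \<alpha>\<^sup>2 * t - 4 * \<alpha> - K > 0" if "t \<ge> R\<^sup>2 / 4" for t
  proof -
    have "4 * \<alpha>\<^sup>2 * t \<ge> 4 * \<alpha>\<^sup>2 * (R\<^sup>2 / 4)" using that by (intro mult_left_mono) auto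
    also have "4 * \<alpha>\<^sup>2 * (R\<^sup>2 / 4) = \<alpha> * (\<alpha> * R\<^sup>2)" by (simp add: power2_eq_square)
    also have "\<alpha> * (\<alpha> * R\<^sup>2) \<ge> \<alpha> * (8 + 4 * K)" using alR al R by (intro mult_left_mono) auto
    finally have "4 * \<alpha>\<^sup>2 * t \<ge> 4 * \<alpha> + \<alpha> * (4 + 4 * K)" by (simp add: algebra_simps)
    moreover have "\<alpha> * (4 + 4 * K) \<ge> 4 + 4 * K" using mult_right_mono[OF al(1), of "4 + 4 * K"] K by simp
    ultimately show ?thesis using K by linarith
  qed
  define den where "den = exp (- \<alpha> * (R/2)\<^sup>2) - exp (- \<alpha> * R\<^sup>2)"
  have den: "den > 0" unfolding den_def using al R by (simp add: power2_eq_square)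
  define m where "m = h zm / den"
  have m: "m > 0" using m0 den by (simp add: m_def)
  have hin: "h z \<ge> m * hopf_barrier \<alpha> y R z" if "dist y z = R / 2" for z
  proof -
    have "cmod (z - y) = R / 2" using that by (simp add: dist_norm norm_minus_commute)
    then have "hopf_barrier \<alpha> y R z = den" unfolding hopf_barrier_def den_def by (simp only:)
    then show ?thesis using den zm(2)[of z] that by (simp add: m_def C_def)
  qed
  show ?thesis
  proof (rule that[of "m * (exp (- \<alpha> * R\<^sup>2) * \<alpha> * R / 4)"])
    show "m * (exp (- \<alpha> * R\<^sup>2) * \<alpha> * R / 4) > 0" using m al R by simp
    fix r w assume r: "0 < r" "r \<le> R / 2" and w: "w \<in> hopf_cone n"
    note g = hopf_cone_geometry[OF R n r w al(2), of q, folded y_def]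
    have "h (q + r *\<^sub>R w) \<ge> m * hopf_barrier \<alpha> y R (q + r *\<^sub>R w)"
      using g(1,2) by (intro hopf_barrier_below[OF R K alK m hc[folded y_def] hin hnn[folded y_def] weak[folded y_def]])
    also have "m * hopf_barrier \<alpha> y R (q + r *\<^sub>R w) \<ge> m * (exp (- \<alpha> * R\<^sup>2) * \<alpha> * r * R / 4)"
      using g(3) m by (intro mult_left_mono) auto
    finally show "h (q + r *\<^sub>R w) \<ge> m * (exp (- \<alpha> * R\<^sup>2) * \<alpha> * R / 4) * r" by (simp add: algebra_simps)
  qed
qed

lemma integral_hopf_cone_mollifier_pos:
  assumes n: "cmod n = 1"
  shows "(\<integral>w. indicator (hopf_cone n) w * mollifier 0 1 w \<partial>lborel) > 0"
proof (rule integral_pos_on_open[OF _ _ open_hopf_cone])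
  show "integrable lborel (\<lambda>w. indicator (hopf_cone n) w * mollifier 0 1 w)"
    using integrable_mult_indicator[OF _ integrable_mollifier[of 1 0], of "hopf_cone n"] open_hopf_cone
    by (simp add: borel_open)
  show "\<And>w. indicator (hopf_cone n) w * mollifier 0 1 w \<ge> 0" using mollifier_nonneg by simp
  have "n * cnj n = 1" using complex_norm_square[of n] n by simp
  then have "Re (of_real (3/4) * n * cnj n) = 3/4" by (simp add: mult.assoc)
  moreover have "cmod (of_real (3/4) * n) = 3/4" using n by (simp add: norm_mult)
  ultimately have "of_real (3/4) * n \<in> hopf_cone n" by (simp add: hopf_cone_def power2_eq_square)
  then show "hopf_cone n \<noteq> {}" by blast
  fix w assume w: "w \<in> hopf_cone n"
  then have "bump ((cmod w)\<^sup>2) > 0" by (intro bump_pos) (auto simp: hopf_cone_def)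
  then show "indicator (hopf_cone n) w * mollifier 0 1 w > 0" using w bump_mass_pos by (simp add: mollifier_def)
qed

lemma integral_mult_mollifier_cone_ge:
  assumes r: "r > 0" and hc: "continuous_on (cball q r) h" and hnn: "\<And>z. z \<in> cball q r \<Longrightarrow> h z \<ge> 0"
    and growth: "\<And>w. w \<in> hopf_cone n \<Longrightarrow> h (q + r *\<^sub>R w) \<ge> c * r"
  shows "(\<integral>z. h z * mollifier q r z \<partial>lborel) \<ge> c * r * (\<integral>w. indicator (hopf_cone n) w * mollifier 0 1 w \<partial>lborel)"
proof -
  have in_ball: "q + r *\<^sub>R w \<in> cball q r" if "w \<in> cball 0 1" for w
    using that r by (auto simp: dist_norm norm_scaleR intro: mult_left_le)
  have "(\<integral>w. c * r * (indicator (hopf_cone n) w * mollifier 0 1 w) \<partial>lborel) \<le>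
      (\<integral>w. h (q + r *\<^sub>R w) * mollifier 0 1 w \<partial>lborel)"
  proof (rule integral_mono)
    show "integrable lborel (\<lambda>w. c * r * (indicator (hopf_cone n) w * mollifier 0 1 w))"
      using integrable_mult_indicator[OF _ integrable_mollifier[of 1 0], of "hopf_cone n"] open_hopf_cone
      by (simp add: borel_open)
    have "continuous_on (cball 0 1) (\<lambda>w. h (q + r *\<^sub>R w))"
      using in_ball by (intro continuous_on_compose2[OF hc] continuous_intros) auto
    then show "integrable lborel (\<lambda>w. h (q + r *\<^sub>R w) * mollifier 0 1 w)"
      using mollifier_outside[of 1 _ 0]
      by (intro integrable_vanishing_outside_cball[of 0 1])
        (auto intro!: continuous_intros continuous_on_subset[OF continuous_mollifier])
    fix w
    show "c * r * (indicator (hopf_cone n) w * mollifier 0 1 w) \<le> h (q + r *\<^sub>R w) * mollifier 0 1 w"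
    proof (cases "w \<in> hopf_cone n")
      case True
      then show ?thesis using growth[OF True] mollifier_nonneg[of 0 1 w] by (simp add: mult_right_mono)
    next
      case False
      have "h (q + r *\<^sub>R w) * mollifier 0 1 w \<ge> 0"
        using hnn[OF in_ball, of w] mollifier_nonneg[of 0 1 w] mollifier_outside[of 1 w 0]
        by (cases "w \<in> cball 0 1") auto
      then show ?thesis using False by simp
    qed
  qed
  also have "\<dots> = (\<integral>z. h z * mollifier q r z \<partial>lborel)"
    by (rule integral_mult_mollifier_rescale[OF r hc, symmetric])
  finally show ?thesis by simp
qed

lemma integral_mult_green_cutoff_le_sup:
  assumes e: "0 < e" "e \<le> r" and hc: "continuous_on (cball q r) h"
    and S: "S \<ge> 0" "\<And>z. z \<in> cball q r \<Longrightarrow> h z \<le> S"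
  shows "(\<integral>z. h z * green_cutoff q r e z \<partial>lborel) \<le> S * (r\<^sup>2 / 4 * mollifier_mass)"
proof -
  have "(\<integral>z. h z * green_cutoff q r e z \<partial>lborel) \<le> (\<integral>z. S * green_cutoff q r e z \<partial>lborel)"
  proof (rule integral_mono[OF integrable_mult_green_cutoff[OF hc e]])
    show "integrable lborel (\<lambda>z. S * green_cutoff q r e z)"
      using integrable_mult_green_cutoff[of q r "\<lambda>_. S" e] e by simp
    fix z show "h z * green_cutoff q r e z \<le> S * green_cutoff q r e z"
      using S(2)[of z] green_cutoff_nonneg[OF e, of q z] green_cutoff_outside[OF e, of z q]
      by (cases "z \<in> cball q r") (auto intro: mult_right_mono)
  qed
  also have "\<dots> = S * (\<integral>z. green_cutoff q r e z \<partial>lborel)" by simp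
  also have "\<dots> \<le> S * (r\<^sup>2 / 4 * mollifier_mass)" using integral_green_cutoff_le[OF e] S by (intro mult_left_mono) auto
  finally show ?thesis .
qed

lemma weak_supersolution_mollified_mean_le:
  assumes e: "0 < e" "e \<le> r" and hc: "continuous_on (cball q r) h" and K: "K \<ge> 0"
    and S: "S \<ge> 0" "\<And>z. z \<in> cball q r \<Longrightarrow> h z \<le> S"
    and weak: "(\<integral>z. h z * laplacian (green_cutoff q r e) z \<partial>lborel) \<le> K * (\<integral>z. h z * green_cutoff q r e z \<partial>lborel)"
  shows "(\<integral>z. h z * mollifier q r z \<partial>lborel) \<le> K * (S * (r\<^sup>2 / 4 * mollifier_mass)) + (\<integral>z. h z * mollifier q e z \<partial>lborel)"
proof -
  have "(\<integral>z. h z * green_cutoff q r e z \<partial>lborel) \<le> S * (r\<^sup>2 / 4 * mollifier_mass)"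
    by (rule integral_mult_green_cutoff_le_sup[OF e hc S])
  from mult_left_mono[OF this K] weak integral_mult_laplacian_green_cutoff[OF hc e] show ?thesis
    by linarith
qed

text \<open>The weak inequality tested against \<open>green_cutoff q r e\<close> bounds the mean of \<open>h\<close> over the \<open>r\<close>-disc
  by \<open>O(r\<^sup>2)\<close> plus its (small) mean near \<open>h q = 0\<close>, which excludes linear growth.\<close>
lemma weak_supersolution_no_linear_growth:
  fixes h :: "complex \<Rightarrow> real"
  assumes rho: "rho > 0" and hc: "continuous_on (cball z0 rho) h"
    and hnn: "\<And>z. z \<in> cball z0 rho \<Longrightarrow> h z \<ge> 0" and K: "K \<ge> 0"
    and weak: "\<And>q r e. 0 < e \<Longrightarrow> e \<le> r \<Longrightarrow> cball q r \<subseteq> ball z0 rho \<Longrightarrow>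
        (\<integral>z. h z * laplacian (green_cutoff q r e) z \<partial>lborel) \<le> K * (\<integral>z. h z * green_cutoff q r e z \<partial>lborel)"
    and q: "q \<in> cball z0 (rho/2)" "h q = 0" and n: "cmod n = 1"
    and c: "c > 0" and R0: "R0 > 0"
    and growth: "\<And>r w. 0 < r \<Longrightarrow> r \<le> R0 \<Longrightarrow> w \<in> hopf_cone n \<Longrightarrow> h (q + r *\<^sub>R w) \<ge> c * r"
  shows False
proof -
  define I where "I = (\<integral>w. indicator (hopf_cone n) w * mollifier 0 1 w \<partial>lborel)"
  have I: "I > 0" unfolding I_def by (rule integral_hopf_cone_mollifier_pos[OF n])
  obtain S where S: "S > 0" "\<And>z. z \<in> cball z0 rho \<Longrightarrow> \<bar>h z\<bar> \<le> S"
    using continuous_on_cball_bounded[OF hc] by blast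
  define B where "B = K * S * mollifier_mass"
  have B: "B \<ge> 0" using K S mollifier_mass_nonneg by (simp add: B_def)
  define r where "r = min R0 (min (rho/4) (c * I / (B + 1)))"
  have r: "r > 0" "r \<le> R0" "r \<le> rho/4" "r \<le> c * I / (B + 1)"
    using R0 rho c I B unfolding r_def by (simp, simp, linarith, linarith)
  then have rB: "r * B + r \<le> c * I" using B by (simp add: field_simps)
  have cq: "cball q r \<subseteq> ball z0 rho"
  proof
    fix z assume "z \<in> cball q r"
    moreover have "dist z0 z \<le> dist z0 q + dist q z" by (rule dist_triangle)
    ultimately show "z \<in> ball z0 rho" using q(1) r rho by simp
  qed
  then have "cball q r \<subseteq> cball z0 rho" using ball_subset_cball by blast
  then have hcq: "continuous_on (cball q r) h" using hc by (rule continuous_on_subset[rotated])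
  define eta where "eta = c * r * I / (2 * (mollifier_mass + 1))"
  have eta: "eta > 0" using c r I mollifier_mass_nonneg by (simp add: eta_def)
  have "eta * mollifier_mass = (c * r * I / 2) * (mollifier_mass / (mollifier_mass + 1))"
    by (simp add: eta_def field_simps)
  also have "\<dots> \<le> (c * r * I / 2) * 1" using c r I mollifier_mass_nonneg by (intro mult_left_mono) auto
  finally have eta_mass: "eta * mollifier_mass \<le> c * r * I / 2" by simp
  obtain e where e: "0 < e" "e \<le> r"
    and hnear: "\<And>e'. 0 < e' \<Longrightarrow> e' \<le> e \<Longrightarrow> (\<integral>z. h z * mollifier q e' z \<partial>lborel) \<le> (h q + eta) * mollifier_mass"
    by (rule integral_mult_mollifier_near[OF hcq r(1) eta]) (rule that)
  have "c * r * I \<le> (\<integral>z. h z * mollifier q r z \<partial>lborel)"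
    unfolding I_def
  proof (rule integral_mult_mollifier_cone_ge[OF r(1) hcq])
    show "\<And>z. z \<in> cball q r \<Longrightarrow> h z \<ge> 0" using hnn cq by auto
    show "\<And>w. w \<in> hopf_cone n \<Longrightarrow> h (q + r *\<^sub>R w) \<ge> c * r" using growth r by auto
  qed
  also have "\<dots> \<le> K * (S * (r\<^sup>2 / 4 * mollifier_mass)) + (\<integral>z. h z * mollifier q e z \<partial>lborel)"
  proof (rule weak_supersolution_mollified_mean_le[OF e hcq K _ _ weak[OF e cq]])
    fix z assume "z \<in> cball q r"
    then have "z \<in> cball z0 rho" using cq by auto
    then show "h z \<le> S" using S(2) abs_le_D1 by blast
  qed (use S in simp)
  also have "\<dots> \<le> K * (S * (r\<^sup>2 / 4 * mollifier_mass)) + eta * mollifier_mass"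
    using hnear[OF e(1) order_refl] q(2) by simp
  also have "\<dots> = r * (r * B) / 4 + eta * mollifier_mass" by (simp add: B_def power2_eq_square algebra_simps)
  also have "\<dots> < c * r * I" 
  proof -
    have "r * B \<le> c * I" using r rB by linarith
    then have "r * (r * B) / 4 \<le> r * (c * I) / 4" using r by (intro divide_right_mono mult_left_mono) auto
    also have "\<dots> < c * r * I / 2" using r c I by (simp add: field_simps)
    finally show ?thesis using eta_mass by linarith
  qed
  finally show False by simp
qed

text \<open>Strong maximum principle: otherwise the Hopf lemma applies at a nearest zero.\<close>
lemma weak_supersolution_zero_nbhd:
  fixes h :: "complex \<Rightarrow> real"
  assumes rho: "rho > 0" and hc: "continuous_on (cball z0 rho) h"
    and hnn: "\<And>z. z \<in> cball z0 rho \<Longrightarrow> h z \<ge> 0" and h0: "h z0 = 0" and K: "K \<ge> 0"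
    and weak: "\<And>q r e. 0 < e \<Longrightarrow> e \<le> r \<Longrightarrow> cball q r \<subseteq> ball z0 rho \<Longrightarrow>
        (\<integral>z. h z * laplacian (green_cutoff q r e) z \<partial>lborel) \<le> K * (\<integral>z. h z * green_cutoff q r e z \<partial>lborel)"
  shows "\<exists>\<delta>>0. \<forall>z\<in>ball z0 \<delta>. h z = 0"
proof (rule ccontr)
  assume "\<not> (\<exists>\<delta>>0. \<forall>z\<in>ball z0 \<delta>. h z = 0)"
  then obtain x where x: "x \<in> ball z0 (rho/4)" "h x \<noteq> 0" using rho
    by (metis divide_pos_pos zero_less_numeral)
  show False
  proof (rule zero_set_interior_ball[OF rho hc hnn h0 x])
    fix q n R
    assume R: "R > 0" and n: "cmod n = 1" and q: "h q = 0" "q \<in> cball z0 (rho/2)"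
      and sub: "cball (q + of_real R * n) R \<subseteq> cball z0 (rho/2)"
      and pos: "\<And>z. dist (q + of_real R * n) z = R / 2 \<Longrightarrow> h z > 0"
    have sub': "cball (q + of_real R * n) R \<subseteq> cball z0 rho" using sub rho by (auto simp: subset_iff)
    have ball_sub: "ball (q + of_real R * n) R \<subseteq> ball z0 rho"
    proof
      fix z assume "z \<in> ball (q + of_real R * n) R"
      then have "z \<in> cball z0 (rho/2)" using sub ball_subset_cball by blast
      then show "z \<in> ball z0 rho" using rho by simp
    qed
    obtain c where c: "c > 0" "\<And>r w. 0 < r \<Longrightarrow> r \<le> R / 2 \<Longrightarrow> w \<in> hopf_cone n \<Longrightarrow> h (q + r *\<^sub>R w) \<ge> c * r"
    proof (rule hopf_linear_growth[OF R n K continuous_on_subset[OF hc sub']])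
      show "\<And>z. z \<in> cball (q + of_real R * n) R \<Longrightarrow> h z \<ge> 0" using hnn sub' by blast
      show "\<And>z. dist (q + of_real R * n) z = R / 2 \<Longrightarrow> h z > 0" by (rule pos)
      fix q' r e assume "0 < e" "e \<le> r" "cball q' r \<subseteq> ball (q + of_real R * n) R"
      then show "(\<integral>z. h z * laplacian (green_cutoff q' r e) z \<partial>lborel) \<le> K * (\<integral>z. h z * green_cutoff q' r e z \<partial>lborel)"
        using ball_sub by (intro weak) auto
    qed (rule that)
    show False
      by (rule weak_supersolution_no_linear_growth[OF rho hc hnn K weak q(2,1) n c(1), of "R / 2"])
        (use R c(2) in auto)
  qed
qed

section \<open>The vortex equation\<close>

text \<open>Right-hand side \<open>2 (e^u - e^((1-k) u) |\<phi>|^2)\<close> of the vortex equation for \<open>g = e^u |dz|^2\<close>,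
  with \<open>a = |\<phi>|\<close>.\<close>
definition vortex_term :: "nat \<Rightarrow> real \<Rightarrow> real \<Rightarrow> real" where
  "vortex_term k a u = 2 * (exp u - exp ((1 - real k) * u) * a\<^sup>2)"

lemma vortex_term_strict_mono:
  assumes "k \<ge> 1" and "u < v"
  shows "vortex_term k a u < vortex_term k a v"
proof -
  have "(1 - real k) * v \<le> (1 - real k) * u" using assms by (intro mult_left_mono_neg) auto
  then have "exp ((1 - real k) * v) * a\<^sup>2 \<le> exp ((1 - real k) * u) * a\<^sup>2" by (intro mult_right_mono) auto
  moreover have "exp u < exp v" using assms(2) by simp
  ultimately show ?thesis unfolding vortex_term_def by (smt (verit))
qed

text \<open>Both exponentials lie above their tangent lines.\<close>
lemma vortex_term_diff_le:
  "vortex_term k a v - vortex_term k a u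
     \<le> (2 * exp v + 2 * (real k - 1) * a\<^sup>2 * exp ((1 - real k) * u)) * (v - u)"
proof -
  define E where "E = exp ((1 - real k) * u)"
  have "exp v * (1 + (u - v)) \<le> exp v * exp (u - v)"
    using exp_ge_add_one_self[of "u - v"] by (intro mult_left_mono) auto
  then have f1: "exp v - exp u \<le> exp v * (v - u)" by (simp add: exp_diff algebra_simps)
  have "E * (1 + (1 - real k) * (v - u)) \<le> E * exp ((1 - real k) * (v - u))"
    using exp_ge_add_one_self[of "(1 - real k) * (v - u)"] by (intro mult_left_mono) (auto simp: E_def)
  also have "\<dots> = exp ((1 - real k) * v)" by (simp add: E_def exp_add[symmetric] algebra_simps)
  finally have "E - exp ((1 - real k) * v) \<le> (real k - 1) * E * (v - u)" by (simp add: algebra_simps)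
  then have f2: "a\<^sup>2 * (E - exp ((1 - real k) * v)) \<le> a\<^sup>2 * ((real k - 1) * E * (v - u))"
    by (rule mult_left_mono) simp
  have "vortex_term k a v - vortex_term k a u = 2 * (exp v - exp u) + 2 * (a\<^sup>2 * (E - exp ((1 - real k) * v)))"
    by (simp add: vortex_term_def E_def algebra_simps)
  also have "\<dots> \<le> 2 * (exp v * (v - u)) + 2 * (a\<^sup>2 * ((real k - 1) * E * (v - u)))"
    using add_mono[OF mult_left_mono[OF f1, of 2] mult_left_mono[OF f2, of 2]] by simp
  also have "\<dots> = (2 * exp v + 2 * (real k - 1) * a\<^sup>2 * exp ((1 - real k) * u)) * (v - u)"
    by (simp add: E_def algebra_simps)
  finally show ?thesis .
qed

text \<open>The local form of the theorem: \<open>um\<close>, \<open>up\<close> are the logarithmic densities of the sub- and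
  supersolution and \<open>a = |\<phi>|\<close>.\<close>
lemma vortex_log_difference_max:
  fixes um up a :: "complex \<Rightarrow> real"
  assumes k: "k \<ge> 1" and rho: "rho > 0"
    and umc: "continuous_on (cball z0 rho) um" and upc: "continuous_on (cball z0 rho) up"
    and ac: "continuous_on (cball z0 rho) a"
    and wmax: "\<And>z. z \<in> cball z0 rho \<Longrightarrow> um z - up z \<le> um z0 - up z0"
    and weak: "\<And>q r e. 0 < e \<Longrightarrow> e \<le> r \<Longrightarrow> cball q r \<subseteq> ball z0 rho \<Longrightarrow>
        (\<integral>z. (um z - up z) * laplacian (green_cutoff q r e) z \<partial>lborel) \<ge>
        (\<integral>z. (vortex_term k (a z) (um z) - vortex_term k (a z) (up z)) * green_cutoff q r e z \<partial>lborel)"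
  shows "um z0 \<le> up z0" and "um z0 = up z0 \<Longrightarrow> \<exists>\<delta>>0. \<forall>z\<in>ball z0 \<delta>. um z = up z"
proof -
  define F where "F z = vortex_term k (a z) (um z) - vortex_term k (a z) (up z)" for z
  have Fc: "continuous_on (cball z0 rho) F"
    unfolding F_def vortex_term_def by (intro continuous_intros umc upc ac)
  have sub: "cball q r \<subseteq> cball z0 rho" if "cball q r \<subseteq> ball z0 rho" for q r
    using that ball_subset_cball by blast
  show "um z0 \<le> up z0"
  proof (rule ccontr)
    assume "\<not> um z0 \<le> up z0"
    then have F0: "F z0 > 0" using vortex_term_strict_mono[OF k] by (simp add: F_def)
    show False
    proof (rule weak_laplacian_pos_no_local_max[OF rho, of z0 "\<lambda>z. um z - up z" F])
      show "continuous_on (cball z0 rho) (\<lambda>z. um z - up z)" by (intro continuous_intros umc upc)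
      fix r e assume "0 < e" "e \<le> r" "r < rho"
      then show "(\<integral>z. F z * green_cutoff z0 r e z \<partial>lborel) \<le> (\<integral>z. (um z - up z) * laplacian (green_cutoff z0 r e) z \<partial>lborel)"
        unfolding F_def by (intro weak) (auto simp: subset_iff)
    qed (use wmax Fc F0 in auto)
  qed
  assume eq: "um z0 = up z0"
  define h where "h z = up z - um z" for z
  have hc: "continuous_on (cball z0 rho) h" unfolding h_def by (intro continuous_intros umc upc)
  have hnn: "h z \<ge> 0" if "z \<in> cball z0 rho" for z using wmax[OF that] eq by (simp add: h_def)
  define b where "b z = 2 * exp (up z) + 2 * (real k - 1) * (a z)\<^sup>2 * exp ((1 - real k) * um z)" for z
  have bc: "continuous_on (cball z0 rho) b" unfolding b_def by (intro continuous_intros umc upc ac)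
  obtain K where K: "K > 0" "\<And>z. z \<in> cball z0 rho \<Longrightarrow> \<bar>b z\<bar> \<le> K"
    using continuous_on_cball_bounded[OF bc] by blast
  have lin: "- F z \<le> K * h z" if "z \<in> cball z0 rho" for z
  proof -
    have "- F z \<le> b z * h z" using vortex_term_diff_le[of k "a z" "up z" "um z"] by (simp add: F_def b_def h_def)
    also have "\<dots> \<le> K * h z" using K(2)[OF that] hnn[OF that] by (intro mult_right_mono) auto
    finally show ?thesis .
  qed
  have "\<exists>\<delta>>0. \<forall>z\<in>ball z0 \<delta>. h z = 0"
  proof (rule weak_supersolution_zero_nbhd[OF rho hc hnn _ less_imp_le[OF K(1)]])
    show "h z0 = 0" using eq by (simp add: h_def)
    fix q r e assume e: "0 < e" "e \<le> r" and qr: "cball q r \<subseteq> ball z0 rho"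
    show "(\<integral>z. h z * laplacian (green_cutoff q r e) z \<partial>lborel) \<le> K * (\<integral>z. h z * green_cutoff q r e z \<partial>lborel)"
    proof (rule weak_ineq_linearized[OF e continuous_on_subset[OF Fc sub[OF qr]] continuous_on_subset[OF hc sub[OF qr]]])
      show "\<And>z. z \<in> cball q r \<Longrightarrow> - F z \<le> K * h z" using lin sub[OF qr] by blast
      show "(\<integral>z. F z * green_cutoff q r e z \<partial>lborel) \<le> (\<integral>z. - h z * laplacian (green_cutoff q r e) z \<partial>lborel)"
        using weak[OF e qr] by (simp add: F_def h_def)
    qed
  qed
  then show "\<exists>\<delta>>0. \<forall>z\<in>ball z0 \<delta>. um z = up z" by (fastforce simp: h_def)
qed

lemma conformal_metric_pos: "conformal_metric A G \<Longrightarrow> c \<in> A \<Longrightarrow> z \<in> snd c ` fst c \<Longrightarrow> G c z > 0"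
  unfolding conformal_metric_def by blast

lemma conformal_metric_continuous: "conformal_metric A G \<Longrightarrow> c \<in> A \<Longrightarrow> continuous_on (snd c ` fst c) (G c)"
  unfolding conformal_metric_def by blast

lemma conformal_metric_ratio_chart_indep:
  assumes "conformal_metric A G1" "conformal_metric A G2"
    and "c \<in> A" "d \<in> A" "p \<in> fst c" "p \<in> fst d"
  shows "G1 c (snd c p) / G2 c (snd c p) = G1 d (snd d p) / G2 d (snd d p)"
proof -
  define X where "X = (norm (deriv (trans_map c d) (snd c p)))\<^sup>2"
  have e1: "G1 c (snd c p) = G1 d (snd d p) * X" and e2: "G2 c (snd c p) = G2 d (snd d p) * X"
    using assms unfolding conformal_metric_def X_def by blast+
  have "G1 c (snd c p) > 0" using conformal_metric_pos assms(1,3,5) by blast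
  then have "X \<noteq> 0" using e1 by auto
  then show ?thesis using e1 e2 by simp
qed

lemma metric_ratio_chart:
  assumes cov: "\<Union>(fst ` A) = UNIV" and "conformal_metric A G1" "conformal_metric A G2"
    and "c \<in> A" "p \<in> fst c"
  shows "metric_ratio A G1 G2 p = G1 c (snd c p) / G2 c (snd c p)"
proof -
  have "\<exists>d. d \<in> A \<and> p \<in> fst d" using cov by blast
  define d where "d = (SOME d. d \<in> A \<and> p \<in> fst d)"
  have d: "d \<in> A" "p \<in> fst d" using someI_ex[OF \<open>\<exists>d. d \<in> A \<and> p \<in> fst d\<close>] by (auto simp: d_def)
  have "metric_ratio A G1 G2 p = G1 d (snd d p) / G2 d (snd d p)" by (simp add: metric_ratio_def d_def Let_def)
  also have "\<dots> = G1 c (snd c p) / G2 c (snd c p)"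
    using conformal_metric_ratio_chart_indep[OF assms(2,3,4) d(1) assms(5) d(2)] by simp
  finally show ?thesis .
qed

lemma conformal_metric_eq_transfer:
  assumes "conformal_metric A G1" "conformal_metric A G2"
    and "c \<in> A" "d \<in> A" "q \<in> fst c" "q \<in> fst d"
    and eq: "G2 c (snd c q) = G1 c (snd c q)"
  shows "G2 d (snd d q) = G1 d (snd d q)"
proof -
  have pos: "G2 d (snd d q) > 0" "G1 c (snd c q) > 0" using conformal_metric_pos assms(1-6) by blast+
  have "G1 d (snd d q) / G2 d (snd d q) = G1 c (snd c q) / G2 c (snd c q)"
    using conformal_metric_ratio_chart_indep[OF assms(1-6)] by simp
  also have "\<dots> = 1" using eq pos(2) by simp
  finally show ?thesis using pos(1) by (simp add: divide_eq_1_iff)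
qed

lemma chart_local_max:
  assumes rs: "riemann_surface A" and G: "conformal_metric A G1" "conformal_metric A G2"
    and lm: "is_local_max (metric_ratio A G1 G2) p" and c: "c \<in> A" "p \<in> fst c"
  obtains rho where "rho > 0" "cball (snd c p) rho \<subseteq> snd c ` fst c"
    "\<And>z. z \<in> cball (snd c p) rho \<Longrightarrow> G1 c z / G2 c z \<le> G1 c (snd c p) / G2 c (snd c p)"
proof -
  have cov: "\<Union>(fst ` A) = UNIV" using rs unfolding riemann_surface_def by blast
  define V where "V = snd c ` fst c"
  define g where "g = inv_into (fst c) (snd c)"
  have Uo: "open (fst c)" and Vo: "open V" and hom: "homeomorphism (fst c) V (snd c) g"
    using rs c(1) unfolding riemann_surface_def V_def g_def by auto
  then have gc: "continuous_on V g" and gV: "\<And>z. z \<in> V \<Longrightarrow> g z \<in> fst c \<and> snd c (g z) = z"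
    and gf: "g (snd c p) = p"
    using c(2) unfolding homeomorphism_def by auto
  obtain W where W: "open W" "p \<in> W" "\<And>q. q \<in> W \<Longrightarrow> metric_ratio A G1 G2 q \<le> metric_ratio A G1 G2 p"
    using lm unfolding is_local_max_def by blast
  define V' where "V' = g -` (W \<inter> fst c) \<inter> V"
  have "open V'" unfolding V'_def using continuous_on_open_vimage[OF Vo] gc W(1) Uo by blast
  moreover have "snd c p \<in> V'" using c(2) W(2) gf by (simp add: V'_def V_def)
  ultimately obtain rho where rho: "rho > 0" "cball (snd c p) rho \<subseteq> V'" using open_contains_cball by blast
  show ?thesis
  proof (rule that[OF rho(1)])
    show "cball (snd c p) rho \<subseteq> snd c ` fst c" using rho(2) by (auto simp: V'_def V_def)
    fix z assume "z \<in> cball (snd c p) rho"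
    then have z: "g z \<in> W" "g z \<in> fst c" "snd c (g z) = z" using rho(2) gV by (auto simp: V'_def)
    show "G1 c z / G2 c z \<le> G1 c (snd c p) / G2 c (snd c p)"
      using W(3)[OF z(1)] metric_ratio_chart[OF cov G c(1) z(2)] metric_ratio_chart[OF cov G c]
      by (simp add: z(3))
  qed
qed

lemma chart_preimage_ball:
  assumes rs: "riemann_surface A" and c: "c \<in> A" "p \<in> fst c" and \<delta>: "\<delta> > 0"
  obtains W where "open W" "p \<in> W" "W \<subseteq> fst c" "\<And>q. q \<in> W \<Longrightarrow> snd c q \<in> ball (snd c p) \<delta>"
proof (rule that)
  have "open (fst c)" and "homeomorphism (fst c) (snd c ` fst c) (snd c) (inv_into (fst c) (snd c))"
    using rs c(1) unfolding riemann_surface_def by auto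
  then show "open (snd c -` ball (snd c p) \<delta> \<inter> fst c)"
    by (intro continuous_on_open_vimage[THEN iffD1, rule_format]) (auto simp: homeomorphism_def)
qed (use c(2) \<delta> in auto)

lemma vortex_sol_green_cutoff:
  assumes sol: "vortex_sol sub A k Phi G" and c: "c \<in> A"
    and e: "0 < e" "e \<le> r" and qr: "cball q r \<subseteq> snd c ` fst c"
  shows "if sub
    then (\<integral>z. ln (G c z) * laplacian (green_cutoff q r e) z \<partial>lborel) \<ge>
         (\<integral>z. vortex_term k (cmod (Phi c z)) (ln (G c z)) * green_cutoff q r e z \<partial>lborel)
    else (\<integral>z. ln (G c z) * laplacian (green_cutoff q r e) z \<partial>lborel) \<le>
         (\<integral>z. vortex_term k (cmod (Phi c z)) (ln (G c z)) * green_cutoff q r e z \<partial>lborel)"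
  using sol c test_fn_green_cutoff[OF e qr] green_cutoff_nonneg[OF e]
  unfolding vortex_sol_def weak_lap_ineq_def Let_def vortex_term_def by auto

lemma vortex_sol_log_continuous:
  assumes sol: "vortex_sol sub A k Phi G" and c: "c \<in> A" and S: "S \<subseteq> snd c ` fst c"
  shows "continuous_on S (\<lambda>z. ln (G c z))"
proof -
  have cm: "conformal_metric A G" using sol by (simp add: vortex_sol_def)
  have "continuous_on (snd c ` fst c) (\<lambda>z. ln (G c z))"
    using conformal_metric_continuous[OF cm c] conformal_metric_pos[OF cm c]
    by (intro continuous_on_ln) (auto simp: less_imp_neq[symmetric])
  then show ?thesis using S by (rule continuous_on_subset)
qed

lemma holomorphic_kdiff_continuous:
  assumes "holomorphic_kdiff A k Phi" "c \<in> A" "S \<subseteq> snd c ` fst c"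
  shows "continuous_on S (Phi c)"
  using assms holomorphic_on_imp_continuous_on continuous_on_subset unfolding holomorphic_kdiff_def by blast

lemma vortex_log_difference_weak:
  assumes subsol: "vortex_subsol A k Phi Gm" and supsol: "vortex_supersol A k Phi Gp"
    and hk: "holomorphic_kdiff A k Phi" and c: "c \<in> A"
    and e: "0 < e" "e \<le> r" and qr: "cball q r \<subseteq> snd c ` fst c"
  shows "(\<integral>z. (ln (Gm c z) - ln (Gp c z)) * laplacian (green_cutoff q r e) z \<partial>lborel) \<ge>
    (\<integral>z. (vortex_term k (cmod (Phi c z)) (ln (Gm c z)) - vortex_term k (cmod (Phi c z)) (ln (Gp c z)))
      * green_cutoff q r e z \<partial>lborel)"
proof (rule weak_ineq_diff[OF vortex_sol_log_continuous[OF subsol c qr] vortex_sol_log_continuous[OF supsol c qr] _ _ e])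
  have um: "continuous_on (cball q r) (\<lambda>z. ln (Gm c z))" and up: "continuous_on (cball q r) (\<lambda>z. ln (Gp c z))"
    by (rule vortex_sol_log_continuous[OF subsol c qr], rule vortex_sol_log_continuous[OF supsol c qr])
  show "continuous_on (cball q r) (\<lambda>z. vortex_term k (cmod (Phi c z)) (ln (Gm c z)))"
    "continuous_on (cball q r) (\<lambda>z. vortex_term k (cmod (Phi c z)) (ln (Gp c z)))"
    unfolding vortex_term_def by (intro continuous_intros um up holomorphic_kdiff_continuous[OF hk c qr])+
qed (use vortex_sol_green_cutoff[OF subsol c e qr] vortex_sol_green_cutoff[OF supsol c e qr] in simp_all)

lemma conformal_metric_eq_nbhd:
  assumes rs: "riemann_surface A" and cm: "conformal_metric A G1" "conformal_metric A G2"
    and c: "c \<in> A" "p \<in> fst c" and \<delta>: "\<delta> > 0" and eq: "\<And>z. z \<in> ball (snd c p) \<delta> \<Longrightarrow> G1 c z = G2 c z"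
  shows "\<exists>W. open W \<and> p \<in> W \<and> (\<forall>d\<in>A. \<forall>q\<in>W \<inter> fst d. G2 d (snd d q) = G1 d (snd d q))"
proof -
  obtain W where W: "open W" "p \<in> W" "W \<subseteq> fst c" "\<And>q. q \<in> W \<Longrightarrow> snd c q \<in> ball (snd c p) \<delta>"
    by (rule chart_preimage_ball[OF rs c \<delta>]) (rule that)
  have "G2 d (snd d q) = G1 d (snd d q)" if d: "d \<in> A" and q: "q \<in> W \<inter> fst d" for d q
  proof -
    have "q \<in> fst c" "snd c q \<in> ball (snd c p) \<delta>" using W(3,4) q by auto
    then show ?thesis using conformal_metric_eq_transfer[OF cm c(1) d \<open>q \<in> fst c\<close>] eq q by simp
  qed
  then show ?thesis using W(1,2) by blast
qed

lemma vortex_ratio_local_max_chart: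
  assumes rs: "riemann_surface A" and k: "k \<ge> 1" and hk: "holomorphic_kdiff A k Phi"
    and subsol: "vortex_subsol A k Phi Gm" and supsol: "vortex_supersol A k Phi Gp"
    and lm: "is_local_max (metric_ratio A Gm Gp) p" and c: "c \<in> A" "p \<in> fst c"
  shows "Gm c (snd c p) \<le> Gp c (snd c p)"
    and "Gm c (snd c p) = Gp c (snd c p) \<Longrightarrow> \<exists>\<delta>>0. \<forall>z\<in>ball (snd c p) \<delta>. Gm c z = Gp c z"
proof -
  have cm: "conformal_metric A Gm" "conformal_metric A Gp" using subsol supsol by (auto simp: vortex_sol_def)
  obtain rho where rho: "rho > 0" and sub: "cball (snd c p) rho \<subseteq> snd c ` fst c"
    and max: "\<And>z. z \<in> cball (snd c p) rho \<Longrightarrow> Gm c z / Gp c z \<le> Gm c (snd c p) / Gp c (snd c p)"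
    by (rule chart_local_max[OF rs cm lm c]) (rule that)
  have pos: "Gm c z > 0" "Gp c z > 0" if "z \<in> cball (snd c p) rho" for z
    using conformal_metric_pos[OF cm(1) c(1)] conformal_metric_pos[OF cm(2) c(1)] sub that by blast+
  note lnm = vortex_sol_log_continuous[OF subsol c(1) sub] and lnp = vortex_sol_log_continuous[OF supsol c(1) sub]
  have wmax: "ln (Gm c z) - ln (Gp c z) \<le> ln (Gm c (snd c p)) - ln (Gp c (snd c p))"
    if z: "z \<in> cball (snd c p) rho" for z
  proof -
    have z0: "snd c p \<in> cball (snd c p) rho" using rho by simp
    have "ln (Gm c z / Gp c z) \<le> ln (Gm c (snd c p) / Gp c (snd c p))"
      using max[OF z] pos[OF z] pos[OF z0] by simp
    then show "ln (Gm c z) - ln (Gp c z) \<le> ln (Gm c (snd c p)) - ln (Gp c (snd c p))"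
      using pos[OF z] pos[OF z0] by (simp add: ln_div)
  qed
  have weak: "(\<integral>z. (ln (Gm c z) - ln (Gp c z)) * laplacian (green_cutoff q r e) z \<partial>lborel) \<ge>
        (\<integral>z. (vortex_term k (cmod (Phi c z)) (ln (Gm c z)) - vortex_term k (cmod (Phi c z)) (ln (Gp c z)))
          * green_cutoff q r e z \<partial>lborel)"
    if e: "0 < e" "e \<le> r" and qr: "cball q r \<subseteq> ball (snd c p) rho" for q r e
    using qr sub ball_subset_cball by (intro vortex_log_difference_weak[OF subsol supsol hk c(1) e]) blast
  note main = vortex_log_difference_max[OF k rho lnm lnp
      continuous_on_norm[OF holomorphic_kdiff_continuous[OF hk c(1) sub]] wmax weak]
  show "Gm c (snd c p) \<le> Gp c (snd c p)" using main(1) pos rho by simp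
  assume "Gm c (snd c p) = Gp c (snd c p)"
  then obtain \<delta> where \<delta>: "\<delta> > 0" "\<forall>z\<in>ball (snd c p) \<delta>. ln (Gm c z) = ln (Gp c z)" using main(2) by auto
  show "\<exists>\<delta>>0. \<forall>z\<in>ball (snd c p) \<delta>. Gm c z = Gp c z"
  proof (intro exI[of _ "min \<delta> rho"] conjI ballI)
    fix z assume "z \<in> ball (snd c p) (min \<delta> rho)"
    then have "z \<in> ball (snd c p) \<delta>" "z \<in> cball (snd c p) rho" by auto
    then have "ln (Gm c z) = ln (Gp c z)" "Gm c z > 0" "Gp c z > 0" using \<delta>(2) pos[of z] by auto
    then show "Gm c z = Gp c z" by simp
  qed (use \<delta>(1) rho in simp)
qed

theorem proposition2p2:
  fixes A :: "('a::t2_space) chart set" and k :: nat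
    and Phi :: "'a chart \<Rightarrow> complex \<Rightarrow> complex"
    and Gm Gp :: "'a chart \<Rightarrow> complex \<Rightarrow> real"
  assumes "riemann_surface A" and "k \<ge> 1" and "holomorphic_kdiff A k Phi"
    and "vortex_subsol A k Phi Gm" and "vortex_supersol A k Phi Gp"
  shows "\<forall>p. \<not> (is_local_max (metric_ratio A Gm Gp) p \<and> metric_ratio A Gm Gp p > 1) \<and>
         (\<forall>p. is_local_max (metric_ratio A Gm Gp) p \<and> metric_ratio A Gm Gp p = 1 \<longrightarrow>
           (\<exists>W. open W \<and> p \<in> W \<and>
              (\<forall>c\<in>A. \<forall>q\<in>W \<inter> fst c. Gp c (snd c q) = Gm c (snd c q))))"
proof -
  have cov: "\<Union>(fst ` A) = UNIV" using assms(1) unfolding riemann_surface_def by blast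
  have cm: "conformal_metric A Gm" "conformal_metric A Gp" using assms(4,5) by (auto simp: vortex_sol_def)
  have "metric_ratio A Gm Gp p \<le> 1 \<and> (metric_ratio A Gm Gp p = 1 \<longrightarrow>
      (\<exists>W. open W \<and> p \<in> W \<and> (\<forall>c\<in>A. \<forall>q\<in>W \<inter> fst c. Gp c (snd c q) = Gm c (snd c q))))"
    if lm: "is_local_max (metric_ratio A Gm Gp) p" for p
  proof -
    obtain c where c: "c \<in> A" "p \<in> fst c" using cov by blast
    have ratio: "metric_ratio A Gm Gp p = Gm c (snd c p) / Gp c (snd c p)" by (rule metric_ratio_chart[OF cov cm c])
    have pos: "Gp c (snd c p) > 0" using conformal_metric_pos[OF cm(2) c(1)] c(2) by blast
    note chart = vortex_ratio_local_max_chart[OF assms lm c]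
    have "\<exists>W. open W \<and> p \<in> W \<and> (\<forall>d\<in>A. \<forall>q\<in>W \<inter> fst d. Gp d (snd d q) = Gm d (snd d q))"
      if "metric_ratio A Gm Gp p = 1"
    proof -
      have "Gm c (snd c p) = Gp c (snd c p)" using that ratio pos by (simp add: divide_eq_1_iff)
      then obtain \<delta> where "\<delta> > 0" "\<forall>z\<in>ball (snd c p) \<delta>. Gm c z = Gp c z" using chart(2) by blast
      then show ?thesis by (intro conformal_metric_eq_nbhd[OF assms(1) cm c]) auto
    qed
    then show ?thesis using chart(1) ratio pos by auto
  qed
  then show ?thesis by fastforce
qed

end
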